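(* Let $\chi:T\to\overline{\mathbf F}_p^\times$ be a smooth character with $\chi\neq\chi^s$, and let $\pi$ be a smooth representation of $G$. Then $\mathrm{Hom}_G(\mathrm{Ind}_P^G\chi,\pi)=\mathrm{Hom}_P(\mathrm{Ind}_P^G\chi,\pi)$.
   Context: $F$ non-Archimedean local field of residual characteristic $p$, $G=\mathrm{GL}_2(F)$, $P$ the upper triangular Borel subgroup, $U$ its unipotent radical, $T$ the diagonal torus; characters of $T$ are viewed as characters of $P$ via $P\to P/U\cong T$. $\chi^s(\mathrm{diag}(a,d))=\chi(\mathrm{diag}(d,a))$. $\mathrm{Ind}_P^G\chi$ is the space of locally constant $f:G\to\overline{\mathbf F}_p$ with $f(bg)=\chi(b)f(g)$ for $b\in P$, with $G$ acting by right translation. Representations are smooth on $\overline{\mathbf F}_p$-vector spaces. *)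

theory Defs
  imports "HOL-Analysis.Determinants" "HOL-Computational_Algebra.Polynomial"
begin

text \<open>v x is the valuation of x for x \<noteq> 0; the value v 0 is irrelevant (v(0) = +infinity).
  vge v x n means v(x) \<ge> n, with the convention v(0) = +infinity.\<close>

definition vge :: "('a::field \<Rightarrow> int) \<Rightarrow> 'a \<Rightarrow> int \<Rightarrow> bool" where
  "vge v x n \<longleftrightarrow> x = 0 \<or> n \<le> v x"

definition discrete_valuation :: "('a::field \<Rightarrow> int) \<Rightarrow> bool" where
  "discrete_valuation v \<longleftrightarrow>
     (\<forall>x y. x \<noteq> 0 \<longrightarrow> y \<noteq> 0 \<longrightarrow> v (x * y) = v x + v y) \<and>
     (\<forall>x y. x \<noteq> 0 \<longrightarrow> y \<noteq> 0 \<longrightarrow> x + y \<noteq> 0 \<longrightarrow> min (v x) (v y) \<le> v (x + y)) \<and>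
     (\<exists>x. x \<noteq> 0 \<and> v x = 1)"

text \<open>Non-Archimedean local field with residual characteristic p: complete for a normalized
  discrete valuation, with finite residue field of characteristic p.\<close>

definition nonarch_local_field :: "('a::field \<Rightarrow> int) \<Rightarrow> nat \<Rightarrow> bool" where
  "nonarch_local_field v p \<longleftrightarrow>
     discrete_valuation v \<and>
     (\<forall>s :: nat \<Rightarrow> 'a. (\<forall>n. \<exists>N. \<forall>i\<ge>N. \<forall>j\<ge>N. vge v (s i - s j) n) \<longrightarrow>
          (\<exists>L. \<forall>n. \<exists>N. \<forall>i\<ge>N. vge v (s i - L) n)) \<and>
     (\<exists>R. finite R \<and> R \<subseteq> {x. vge v x 0} \<and> (\<forall>x. vge v x 0 \<longrightarrow> (\<exists>r\<in>R. vge v (x - r) 1))) \<and>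
     prime p \<and> vge v (of_nat p) 1"

definition is_alg_closure_Fp :: "'k::field itself \<Rightarrow> nat \<Rightarrow> bool" where
  "is_alg_closure_Fp _ p \<longleftrightarrow>
     of_nat p = (0::'k) \<and>
     (\<forall>q :: 'k poly. 0 < degree q \<longrightarrow> (\<exists>x. poly q x = 0)) \<and>
     (\<forall>x :: 'k. \<exists>n>0. x ^ (p ^ n) = x)"

definition GL2 :: "(('a::field)^2^2) set" where
  "GL2 = {g. det g \<noteq> 0}"

definition Borel :: "(('a::field)^2^2) set" where
  "Borel = {b \<in> GL2. b $ 2 $ 1 = 0}"

text \<open>Principal congruence subgroups K_n (n \<ge> 1); they form a basis of open neighbourhoods
  of the identity in GL_2(F).\<close>

definition congr_sub :: "('a::field \<Rightarrow> int) \<Rightarrow> int \<Rightarrow> ('a^2^2) set" where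
  "congr_sub v n = {g. \<forall>i j. vge v ((g - mat 1) $ i $ j) n}"

text \<open>A character of T is recorded as chi a d = chi(diag(a,d)) for a, d \<noteq> 0.\<close>

definition smooth_character :: "('a::field \<Rightarrow> int) \<Rightarrow> ('a \<Rightarrow> 'a \<Rightarrow> 'k::field) \<Rightarrow> bool" where
  "smooth_character v chi \<longleftrightarrow>
     (\<forall>a d a' d'. a \<noteq> 0 \<longrightarrow> d \<noteq> 0 \<longrightarrow> a' \<noteq> 0 \<longrightarrow> d' \<noteq> 0 \<longrightarrow>
        chi (a * a') (d * d') = chi a d * chi a' d') \<and>
     (\<forall>a d. a \<noteq> 0 \<longrightarrow> d \<noteq> 0 \<longrightarrow> chi a d \<noteq> 0) \<and>
     (\<exists>n\<ge>1. \<forall>a d. vge v (a - 1) n \<longrightarrow> vge v (d - 1) n \<longrightarrow> chi a d = 1)"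

definition char_swap :: "('a \<Rightarrow> 'a \<Rightarrow> 'k) \<Rightarrow> 'a \<Rightarrow> 'a \<Rightarrow> 'k" where
  "char_swap chi a d = chi d a"

definition char_eq :: "('a::field \<Rightarrow> 'a \<Rightarrow> 'k) \<Rightarrow> ('a \<Rightarrow> 'a \<Rightarrow> 'k) \<Rightarrow> bool" where
  "char_eq chi psi \<longleftrightarrow> (\<forall>a d. a \<noteq> 0 \<longrightarrow> d \<noteq> 0 \<longrightarrow> chi a d = psi a d)"

definition loc_const_G :: "('a::field \<Rightarrow> int) \<Rightarrow> ('a^2^2 \<Rightarrow> 'k) \<Rightarrow> bool" where
  "loc_const_G v f \<longleftrightarrow> (\<forall>g\<in>GL2. \<exists>n\<ge>1. \<forall>k\<in>congr_sub v n. f (g ** k) = f g)"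

text \<open>Ind_P^G chi, as functions on 2x2 matrices vanishing off GL_2(F).\<close>

definition Ind :: "('a::field \<Rightarrow> int) \<Rightarrow> ('a \<Rightarrow> 'a \<Rightarrow> 'k::field) \<Rightarrow> (('a^2^2) \<Rightarrow> 'k) set" where
  "Ind v chi = {f. loc_const_G v f \<and> (\<forall>x. x \<notin> GL2 \<longrightarrow> f x = 0) \<and>
       (\<forall>b\<in>Borel. \<forall>g\<in>GL2. f (b ** g) = chi (b $ 1 $ 1) (b $ 2 $ 2) * f g)}"

definition right_transl :: "'a::field^2^2 \<Rightarrow> ('a^2^2 \<Rightarrow> 'k::zero) \<Rightarrow> 'a^2^2 \<Rightarrow> 'k" where
  "right_transl h f = (\<lambda>x. if x \<in> GL2 then f (x ** h) else 0)"

definition smooth_rep ::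
  "('a::field \<Rightarrow> int) \<Rightarrow> ('k::field \<Rightarrow> 'v::ab_group_add \<Rightarrow> 'v) \<Rightarrow> ('a^2^2 \<Rightarrow> 'v \<Rightarrow> 'v) \<Rightarrow> bool" where
  "smooth_rep v smul rho \<longleftrightarrow>
     vector_space smul \<and>
     (\<forall>g\<in>GL2. Vector_Spaces.linear smul smul (rho g)) \<and>
     (\<forall>x. rho (mat 1) x = x) \<and>
     (\<forall>g\<in>GL2. \<forall>h\<in>GL2. \<forall>x. rho (g ** h) x = rho g (rho h x)) \<and>
     (\<forall>x. \<exists>n\<ge>1. \<forall>k\<in>congr_sub v n. rho k x = x)"

definition Hom_H ::
  "('a::field^2^2) set \<Rightarrow> ('a \<Rightarrow> int) \<Rightarrow> ('a \<Rightarrow> 'a \<Rightarrow> 'k::field) \<Rightarrow>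
   ('k \<Rightarrow> 'v::ab_group_add \<Rightarrow> 'v) \<Rightarrow> ('a^2^2 \<Rightarrow> 'v \<Rightarrow> 'v) \<Rightarrow> (('a^2^2 \<Rightarrow> 'k) \<Rightarrow> 'v) set" where
  "Hom_H H v chi smul rho = {phi.
     (\<forall>f1\<in>Ind v chi. \<forall>f2\<in>Ind v chi. phi (\<lambda>x. f1 x + f2 x) = phi f1 + phi f2) \<and>
     (\<forall>c. \<forall>f\<in>Ind v chi. phi (\<lambda>x. c * f x) = smul c (phi f)) \<and>
     (\<forall>h\<in>H. \<forall>f\<in>Ind v chi. phi (right_transl h f) = rho h (phi f))}"

end

theory Submission
  imports Defs
begin

text \<open>For a \<open>P\<close>-equivariant linear map \<open>phi\<close> consider the defect
  \<open>D(g, f) = phi (g f) - g (phi f)\<close>: it vanishes for \<open>g \<in> P\<close>, is a cocycle, and is compatible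
  with \<open>P\<close> on both sides. Every \<open>f\<close> vanishing on \<open>P\<close> is a finite combination of
  \<open>U\<close>-translates of the functions \<open>cell_ind k\<close> supported on \<open>P w U_k\<close> (a compactness argument,
  using completeness and the finite residue field). Smoothness of \<open>pi\<close>, after rescaling by
  \<open>diag(\<pi>^j, 1)\<close>, makes \<open>phi (cell_ind k)\<close> invariant under small lower unipotents, and this gives
  \<open>D(g, f) = 0\<close> whenever \<open>f\<close> vanishes at \<open>1\<close> and at \<open>g\<close>. Hence \<open>D(w, f) = f(1) \<gamma>\<close> for a single
  vector \<open>\<gamma>\<close> whenever \<open>f(w) = 0\<close>. This \<open>\<gamma>\<close> is fixed by all lower and all small upper
  unipotents, hence by \<open>diag(a, 1/a)\<close>, on which the torus acts through \<open>chi^s\<close>; as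
  \<open>chi \<noteq> chi^s\<close>, \<open>\<gamma> = 0\<close>, and then \<open>D\<close> vanishes identically.\<close>

definition mat2 :: "'a \<Rightarrow> 'a \<Rightarrow> 'a \<Rightarrow> 'a \<Rightarrow> 'a^2^2" where
  "mat2 a b c d = (\<chi> i j. if i = 1 then (if j = 1 then a else b) else (if j = 1 then c else d))"

lemma mat2_nth [simp]:
  "mat2 a b c d $ 1 $ 1 = a" "mat2 a b c d $ 1 $ 2 = b"
  "mat2 a b c d $ 2 $ 1 = c" "mat2 a b c d $ 2 $ 2 = d"
  by (auto simp: mat2_def)

lemma mat2_cases: obtains a b c d where "A = mat2 a b c d"
proof
  show "A = mat2 (A$1$1) (A$1$2) (A$2$1) (A$2$2)"
    by (auto simp: vec_eq_iff forall_2)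
qed

lemma mat2_mult [simp]:
  fixes a b c d :: "'a::semiring_1"
  shows "mat2 a b c d ** mat2 a' b' c' d' =
    mat2 (a*a' + b*c') (a*b' + b*d') (c*a' + d*c') (c*b' + d*d')"
  by (auto simp: vec_eq_iff forall_2 matrix_matrix_mult_def sum_2)

lemma mat2_eq_iff [simp]:
  "mat2 a b c d = mat2 a' b' c' d' \<longleftrightarrow> a = a' \<and> b = b' \<and> c = c' \<and> d = d'"
  by (metis mat2_nth)

lemma mat2_diff: "mat2 a b c d - mat2 a' b' c' d' = mat2 (a - a') (b - b') (c - c') (d - d')"
  by (auto simp: vec_eq_iff forall_2)

lemma matrix_mult_diff_distrib:
  fixes A B C :: "'a::comm_ring_1^2^2"
  shows "(A - B) ** C = A ** C - B ** C" "C ** (A - B) = C ** A - C ** B"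
  by (cases A rule: mat2_cases, cases B rule: mat2_cases, cases C rule: mat2_cases,
      simp add: mat2_diff algebra_simps)+

lemma det_mat2 [simp]: "det (mat2 a b c d) = a*d - b*c"
  by (simp add: det_2)

lemma mat1_eq_mat2: "(mat 1 :: 'a::semiring_1^2^2) = mat2 1 0 0 1"
  by (auto simp: vec_eq_iff forall_2 mat_def)

lemma GL2_mat2 [simp]: "mat2 a b c d \<in> GL2 \<longleftrightarrow> a*d - b*c \<noteq> 0"
  by (simp add: GL2_def)

lemma Borel_mat2 [simp]: "mat2 a b c d \<in> Borel \<longleftrightarrow> c = 0 \<and> a \<noteq> 0 \<and> d \<noteq> 0"
  by (auto simp: Borel_def)

lemma congr_sub_mat2:
  "mat2 a b c d \<in> congr_sub v n \<longleftrightarrow> vge v (a - 1) n \<and> vge v b n \<and> vge v c n \<and> vge v (d - 1) n"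
  by (simp add: congr_sub_def forall_2 mat_def)

lemma mat1_GL2 [simp]: "mat 1 \<in> GL2"
  by (simp add: mat1_eq_mat2)

lemma GL2_mult: "g \<in> GL2 \<Longrightarrow> h \<in> GL2 \<Longrightarrow> g ** h \<in> GL2"
  by (simp add: GL2_def det_mul)

lemma Borel_GL2: "b \<in> Borel \<Longrightarrow> b \<in> GL2"
  by (simp add: Borel_def)

lemma GL2_inverse:
  assumes "g \<in> GL2"
  obtains g' where "g ** g' = mat 1" "g' ** g = mat 1" "g' \<in> GL2"
proof -
  obtain g' where g': "g ** g' = mat 1" "g' ** g = mat 1"
    using assms invertible_det_nz[of g] by (auto simp: GL2_def invertible_def)
  then have "det g * det g' = 1"
    by (metis det_I det_mul)
  then have "det g' \<noteq> 0"
    by auto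
  then show thesis
    using g' that by (simp add: GL2_def)
qed

definition upper :: "'a::field \<Rightarrow> 'a^2^2" where "upper x = mat2 1 x 0 1"
definition lower :: "'a::field \<Rightarrow> 'a^2^2" where "lower y = mat2 1 0 y 1"
definition weyl :: "'a::field^2^2" where "weyl = mat2 0 1 1 0"

lemma upper_lower_weyl_GL2 [simp]: "upper x \<in> GL2" "lower y \<in> GL2" "weyl \<in> GL2"
  by (simp_all add: upper_def lower_def weyl_def)

lemma upper_Borel [simp]: "upper x \<in> Borel"
  by (simp add: upper_def)

lemma Borel_lower_factor:
  assumes "d \<noteq> 0"
  shows "mat2 a b c d = mat2 ((a*d - b*c) / d) b 0 d ** lower (c / d)"
  using assms by (simp add: lower_def field_simps)

lemma Borel_weyl_upper_factor:
  assumes "c \<noteq> 0"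
  shows "mat2 a b c d = mat2 (- (a*d - b*c) / c) a 0 c ** (weyl ** upper (d / c))"
  using assms by (simp add: weyl_def upper_def field_simps)

lemma lower_upper_factor:
  assumes "1 - c*y \<noteq> 0"
  shows "lower y ** upper (- c) =
    upper (- (c / (1 - c*y))) ** mat2 (1 / (1 - c*y)) 0 0 (1 - c*y) ** lower (y / (1 - c*y))"
proof -
  obtain e where e: "1 - c*y = e"
    by simp
  with assms have "1 / e + - (c / e) * e * (y / e) = 1" "- (c / e) * e = - c" "e * (y / e) = y"
      "1 - y*c = e"
    by (simp_all add: field_simps mult.commute)
  then show ?thesis
    unfolding e lower_def upper_def by simp
qed

section \<open>Discrete valuations\<close>

locale discretely_valued =
  fixes v :: "'a::field \<Rightarrow> int"
  assumes discrete_valuation: "discrete_valuation v"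
begin

lemma v_mult: "x \<noteq> 0 \<Longrightarrow> y \<noteq> 0 \<Longrightarrow> v (x * y) = v x + v y"
  using discrete_valuation by (auto simp: discrete_valuation_def)

lemma v_ultrametric: "x \<noteq> 0 \<Longrightarrow> y \<noteq> 0 \<Longrightarrow> x + y \<noteq> 0 \<Longrightarrow> min (v x) (v y) \<le> v (x + y)"
  using discrete_valuation by (auto simp: discrete_valuation_def)

lemma v_one [simp]: "v 1 = 0"
  using v_mult[of 1 1] by simp

lemma v_minus [simp]: "v (- x) = v x"
proof (cases "x = 0")
  case False
  have "v (-1) = 0"
    using v_mult[of "-1" "-1"] by simp
  then show ?thesis
    using False v_mult[of "-1" x] by simp
qed simp

lemma v_inverse: "x \<noteq> 0 \<Longrightarrow> v (inverse x) = - v x"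
  using v_mult[of x "inverse x"] by simp

lemma v_divide: "x \<noteq> 0 \<Longrightarrow> y \<noteq> 0 \<Longrightarrow> v (x / y) = v x - v y"
  by (simp add: divide_inverse v_mult v_inverse)

lemma vge_iff: "x \<noteq> 0 \<Longrightarrow> vge v x n \<longleftrightarrow> n \<le> v x"
  by (simp add: vge_def)

lemma vge_0 [simp]: "vge v 0 n"
  by (simp add: vge_def)

lemma vge_minus [simp]: "vge v (- x) n \<longleftrightarrow> vge v x n"
  by (simp add: vge_def)

lemma vge_add: "vge v x n \<Longrightarrow> vge v y n \<Longrightarrow> vge v (x + y) n"
  unfolding vge_def using v_ultrametric[of x y] by fastforce

lemma vge_diff: "vge v x n \<Longrightarrow> vge v y n \<Longrightarrow> vge v (x - y) n"
  using vge_add[of x n "- y"] by simp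

lemma vge_diff_commute: "vge v (x - y) n \<longleftrightarrow> vge v (y - x) n"
  using vge_minus[of "x - y" n] by simp

lemma vge_trans: "vge v (x - y) n \<Longrightarrow> vge v (y - z) n \<Longrightarrow> vge v (x - z) n"
  using vge_add[of "x - y" n "y - z"] by simp

lemma vge_congruent: "vge v (x - y) n \<Longrightarrow> vge v x n \<longleftrightarrow> vge v y n"
  using vge_diff[of x n "x - y"] vge_add[of "x - y" n y] by auto

lemma vge_mono: "vge v x n \<Longrightarrow> m \<le> n \<Longrightarrow> vge v x m"
  by (auto simp: vge_def)

lemma vge_mult: "vge v x n \<Longrightarrow> vge v y m \<Longrightarrow> vge v (x * y) (n + m)"
  by (cases "x = 0 \<or> y = 0") (auto simp: vge_def v_mult)

lemma vge_mult_iff: "y \<noteq> 0 \<Longrightarrow> vge v (x * y) n \<longleftrightarrow> vge v x (n - v y)"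
  by (cases "x = 0") (auto simp: vge_def v_mult)

lemma vge_divide_iff: "y \<noteq> 0 \<Longrightarrow> vge v (x / y) n \<longleftrightarrow> vge v x (n + v y)"
  by (cases "x = 0") (auto simp: vge_def v_divide)

lemma vge_exists: "\<exists>n. vge v x n"
  by (auto simp: vge_def)

lemma unit_near_one:
  assumes "vge v (a - 1) n" "1 \<le> n"
  shows "a \<noteq> 0" "v a = 0"
proof -
  have e: "vge v (a - 1) 1"
    using assms vge_mono by blast
  then show "a \<noteq> 0"
    using vge_minus[of 1 1] by (auto simp: vge_def)
  have "vge v a 0"
    using vge_add[OF vge_mono[OF e, of 0], of 1] by (simp add: vge_def)
  moreover have "\<not> vge v a 1"
    using vge_diff[of a 1 "a - 1"] e by (auto simp: vge_def)
  ultimately show "v a = 0"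
    using \<open>a \<noteq> 0\<close> by (simp add: vge_def)
qed

lemma vge_mult_unit: "u \<noteq> 0 \<Longrightarrow> v u = 0 \<Longrightarrow> vge v (x * u) n \<longleftrightarrow> vge v x n"
  by (simp add: vge_mult_iff)

lemma vge_divide_unit: "u \<noteq> 0 \<Longrightarrow> v u = 0 \<Longrightarrow> vge v (x / u) n \<longleftrightarrow> vge v x n"
  by (simp add: vge_divide_iff)

definition uniformizer :: 'a where
  "uniformizer = (SOME x. x \<noteq> 0 \<and> v x = 1)"

lemma uniformizer: "uniformizer \<noteq> 0" "v uniformizer = 1"
proof -
  have "\<exists>x. x \<noteq> 0 \<and> v x = 1"
    using discrete_valuation by (auto simp: discrete_valuation_def)
  then have "uniformizer \<noteq> 0 \<and> v uniformizer = 1"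
    unfolding uniformizer_def by (rule someI_ex)
  then show "uniformizer \<noteq> 0" "v uniformizer = 1"
    by auto
qed

definition unif_pow :: "int \<Rightarrow> 'a" where
  "unif_pow n = uniformizer powi n"

lemma unif_pow_nonzero [simp]: "unif_pow n \<noteq> 0"
  using uniformizer by (simp add: unif_pow_def)

lemma v_unif_pow [simp]: "v (unif_pow n) = n"
proof -
  have nat_pow: "v (uniformizer ^ k) = int k" for k
    by (induction k) (simp_all add: uniformizer v_mult)
  show ?thesis
  proof (cases "n \<ge> 0")
    case True
    then show ?thesis
      using nat_pow[of "nat n"] by (simp add: unif_pow_def power_int_def)
  next
    case False
    then have "unif_pow n = inverse (uniformizer ^ nat (- n))"
      by (simp add: unif_pow_def power_int_def power_inverse)
    then show ?thesis
      using False nat_pow[of "nat (- n)"] uniformizer(1) by (simp add: v_inverse)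
  qed
qed

lemma vge_unif_pow_mult: "vge v (unif_pow n * x) m \<longleftrightarrow> vge v x (m - n)"
  using vge_mult_iff[of "unif_pow n" x m] by (simp add: mult.commute)

lemma moebius_unit:
  assumes "vge v c k" "vge v y (1 - k)"
  shows "1 - c*y \<noteq> 0" "v (1 - c*y) = 0"
  using unit_near_one[of "1 - c*y" 1] vge_mult[OF assms] by simp_all

lemma coset_reps_moebius:
  fixes y :: 'a
  defines "tau \<equiv> \<lambda>c. c / (1 - c*y)"
  assumes y: "vge v y (1 - k)"
    and R: "\<forall>c\<in>R. vge v c k" "\<forall>x. vge v x k \<longrightarrow> (\<exists>!c. c \<in> R \<and> vge v (x - c) l)"
  shows "\<forall>c\<in>R. vge v (tau c) k" "\<forall>x. vge v x k \<longrightarrow> (\<exists>!c. c \<in> R \<and> vge v (x - tau c) l)"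
proof -
  have tau_cong: "vge v (tau c1 - tau c2) n \<longleftrightarrow> vge v (c1 - c2) n"
    if "vge v c1 k" "vge v c2 k" for c1 c2 n
  proof -
    note u = moebius_unit[OF that(1) y] moebius_unit[OF that(2) y]
    have "tau c1 - tau c2 = (c1 - c2) / ((1 - c1*y) * (1 - c2*y))"
      using u by (simp add: tau_def field_simps)
    then show ?thesis
      using u by (simp add: vge_divide_unit v_mult)
  qed
  have tau_ball: "vge v (tau c) k" if "vge v c k" for c
    using moebius_unit[OF that y] that by (simp add: tau_def vge_divide_unit)
  show "\<forall>c\<in>R. vge v (tau c) k"
    using R(1) tau_ball by blast
  show "\<forall>x. vge v x k \<longrightarrow> (\<exists>!c. c \<in> R \<and> vge v (x - tau c) l)"
  proof (intro allI impI)
    fix x assume x: "vge v x k"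
    have u: "1 + x*y \<noteq> 0" "v (1 + x*y) = 0"
      using moebius_unit[of "- x" k y] x y by simp_all
    define x0 where "x0 = x / (1 + x*y)"
    have x0: "vge v x0 k" "tau x0 = x"
      using x u by (simp_all add: x0_def vge_divide_unit tau_def field_simps)
    obtain c where c: "c \<in> R" "vge v (x0 - c) l"
      using R(2) x0(1) by blast
    have "vge v (x - tau c) l"
      using c tau_cong[OF x0(1), of c l] R(1) x0(2) by simp
    moreover have "c1 = c2"
      if "c1 \<in> R" "vge v (x - tau c1) l" "c2 \<in> R" "vge v (x - tau c2) l" for c1 c2
    proof -
      have "vge v (tau c1 - tau c2) l"
        using vge_trans[of "tau c1" x l "tau c2"] that vge_diff_commute by blast
      then have "vge v (c1 - c2) l"
        using tau_cong R(1) that by blast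
      then show ?thesis
        using R that(1,3) vge_0[of l] by (metis diff_self)
    qed
    ultimately show "\<exists>!c. c \<in> R \<and> vge v (x - tau c) l"
      using c(1) by blast
  qed
qed

lemma step_function_expansion:
  fixes F :: "'a \<Rightarrow> 'b::comm_monoid_add"
  assumes I: "finite I" and ab: "a \<le> b"
    and r: "\<forall>i\<in>I. vge v (r i) a" and uniq: "\<forall>x. vge v x a \<longrightarrow> (\<exists>!i. i \<in> I \<and> vge v (x - r i) b)"
    and vanish: "\<forall>x. \<not> vge v x a \<longrightarrow> F x = 0"
    and period: "\<forall>x y. vge v (x - y) b \<longrightarrow> F x = F y"
  shows "F x = (\<Sum>i\<in>I. if vge v (x - r i) b then F (r i) else 0)"
proof (cases "vge v x a")
  case True
  then obtain i0 where i0: "i0 \<in> I" "vge v (x - r i0) b"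
    and only: "\<And>i. i \<in> I \<Longrightarrow> vge v (x - r i) b \<Longrightarrow> i = i0"
    using uniq by blast
  have "(\<Sum>i\<in>I. if vge v (x - r i) b then F (r i) else 0) = (\<Sum>i\<in>I. if i = i0 then F (r i) else 0)"
    using i0(2) only by (intro sum.cong refl) (metis (full_types))
  also have "\<dots> = F (r i0)"
    using I i0(1) by simp
  also have "\<dots> = F x"
    using period i0(2) by metis
  finally show ?thesis ..
next
  case False
  have "\<not> vge v (x - r i) b" if "i \<in> I" for i
    using False vge_add[of "x - r i" a "r i"] vge_mono[OF _ ab] r that by auto
  then show ?thesis
    using False vanish by simp
qed

lemma ratio_ball_lower_shift:
  assumes y: "vge v y (1 - k)"
  shows "(c \<noteq> 0 \<and> vge v (d / c) k) \<longleftrightarrow> (c + d*y \<noteq> 0 \<and> vge v (d / (c + d*y)) k)"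
proof -
  have shift: "c' + d*y' \<noteq> 0 \<and> vge v (d / (c' + d*y')) k"
    if y': "vge v y' (1 - k)" and c': "c' \<noteq> 0" "vge v (d / c') k" for c' y'
  proof -
    have u: "1 - (- (d / c')) * y' \<noteq> 0" "v (1 - (- (d / c')) * y') = 0"
      using moebius_unit[of "- (d / c')" k y'] c' y' by simp_all
    have "c' + d*y' = c' * (1 - (- (d / c')) * y')"
      using c' by (simp add: field_simps)
    then have "c' + d*y' \<noteq> 0" "d / (c' + d*y') = (d / c') / (1 - (- (d / c')) * y')"
      using u c' by simp_all
    then show ?thesis
      using u c' vge_divide_unit by presburger
  qed
  show ?thesis
  proof
    assume "c \<noteq> 0 \<and> vge v (d / c) k"
    then show "c + d*y \<noteq> 0 \<and> vge v (d / (c + d*y)) k"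
      using shift y by blast
  next
    assume "c + d*y \<noteq> 0 \<and> vge v (d / (c + d*y)) k"
    then show "c \<noteq> 0 \<and> vge v (d / c) k"
      using shift[of "- y" "c + d*y"] y by simp
  qed
qed

lemma congr_sub_mono: "m \<le> n \<Longrightarrow> g \<in> congr_sub v n \<Longrightarrow> g \<in> congr_sub v m"
  by (auto simp: congr_sub_def intro: vge_mono)

lemma congr_sub_GL2:
  assumes "1 \<le> n" "g \<in> congr_sub v n"
  shows "g \<in> GL2"
proof -
  obtain a b c d where g: "g = mat2 a b c d"
    by (rule mat2_cases)
  with assms have h: "vge v (a - 1) 1" "vge v b 1" "vge v c 1" "vge v (d - 1) 1"
    by (auto simp: congr_sub_mat2 intro: vge_mono)
  have t: "vge v ((a - 1) * (d - 1)) 1" "vge v (b * c) 1"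
    using vge_mult[OF h(1,4)] vge_mult[OF h(2,3)] by (auto elim: vge_mono)
  have eq: "a*d - b*c - 1 = (a - 1) + (d - 1) + (a - 1) * (d - 1) - b * c"
    by (simp add: algebra_simps)
  have "vge v (a*d - b*c - 1) 1"
    unfolding eq by (rule vge_diff[OF vge_add[OF vge_add[OF h(1) h(4)] t(1)] t(2)])
  then have "a*d - b*c \<noteq> 0"
    using unit_near_one(1) by blast
  then show ?thesis
    using g by simp
qed

definition entries_vge :: "'a^2^2 \<Rightarrow> int \<Rightarrow> bool" where
  "entries_vge A m \<longleftrightarrow> (\<forall>i j. vge v (A$i$j) m)"

lemma entries_vge_mat2: "entries_vge (mat2 a b c d) m \<longleftrightarrow> vge v a m \<and> vge v b m \<and> vge v c m \<and> vge v d m"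
  by (simp add: entries_vge_def forall_2)

lemma entries_vge_mult: "entries_vge A m1 \<Longrightarrow> entries_vge B m2 \<Longrightarrow> entries_vge (A ** B) (m1 + m2)"
  by (cases A rule: mat2_cases, cases B rule: mat2_cases) (auto simp: entries_vge_mat2 intro!: vge_add vge_mult)

lemma entries_vge_exists: "\<exists>m. entries_vge A m"
proof -
  obtain a b c d where A: "A = mat2 a b c d"
    by (rule mat2_cases)
  obtain m1 m2 m3 m4 where "vge v a m1" "vge v b m2" "vge v c m3" "vge v d m4"
    using vge_exists by metis
  moreover define m where "m = min (min m1 m2) (min m3 m4)"
  then have "m \<le> m1" "m \<le> m2" "m \<le> m3" "m \<le> m4"
    by simp_all
  ultimately show ?thesis
    unfolding A entries_vge_mat2
    using vge_mono[of a m1 m] vge_mono[of b m2 m] vge_mono[of c m3 m] vge_mono[of d m4 m] by blast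
qed

lemma congr_sub_iff_entries_vge: "g \<in> congr_sub v n \<longleftrightarrow> entries_vge (g - mat 1) n"
  by (simp add: congr_sub_def entries_vge_def)

lemma congr_sub_conj:
  assumes "g ** g' = mat 1" "g' ** g = mat 1"
  shows "\<exists>N\<ge>1. \<forall>k\<in>congr_sub v N. g' ** k ** g \<in> congr_sub v n"
proof -
  obtain m1 m2 where m: "entries_vge g' m1" "entries_vge g m2"
    using entries_vge_exists by metis
  define N where "N = max 1 (n - m1 - m2)"
  have "g' ** k ** g \<in> congr_sub v n" if "k \<in> congr_sub v N" for k
  proof -
    have "entries_vge (k - mat 1) N"
      using that by (simp add: congr_sub_iff_entries_vge)
    then have "entries_vge (g' ** (k - mat 1) ** g) (m1 + N + m2)"
      using entries_vge_mult m by blast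
    moreover have "g' ** (k - mat 1) ** g = g' ** k ** g - mat 1"
      using assms by (simp add: matrix_mult_diff_distrib)
    ultimately have "\<forall>i j. vge v ((g' ** k ** g - mat 1) $ i $ j) (m1 + N + m2)"
      by (simp add: entries_vge_def)
    moreover have "n \<le> m1 + N + m2"
      by (simp add: N_def)
    ultimately show ?thesis
      unfolding congr_sub_iff_entries_vge entries_vge_def using vge_mono by blast
  qed
  moreover have "N \<ge> 1"
    by (simp add: N_def)
  ultimately show ?thesis
    by blast
qed

lemma congr_sub_lower_Borel_factor:
  assumes "1 \<le> n" "mat2 a b c d \<in> congr_sub v n"
  shows "mat2 a b c d = lower (c/a) ** mat2 a b 0 (d - c*b/a)"
    "vge v (a - 1) n" "vge v b n" "vge v (c/a) n" "vge v ((d - c*b/a) - 1) n"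
proof -
  have h: "vge v (a - 1) n" "vge v b n" "vge v c n" "vge v (d - 1) n"
    using assms by (auto simp: congr_sub_mat2)
  have ua: "a \<noteq> 0" "v a = 0"
    using unit_near_one[OF h(1) assms(1)] by auto
  show "vge v (a - 1) n" "vge v b n"
    using h by auto
  show "mat2 a b c d = lower (c/a) ** mat2 a b 0 (d - c*b/a)"
    using ua by (simp add: lower_def field_simps)
  show "vge v (c/a) n"
    using h ua by (simp add: vge_divide_unit)
  have "vge v (c*b/a) (n + n)"
    using vge_mult[OF h(3) h(2)] ua by (simp add: vge_divide_unit)
  then have cb: "vge v (c*b/a) n"
    by (rule vge_mono) (use assms in simp)
  have eq: "(d - c*b/a) - 1 = (d - 1) - c*b/a"
    by simp
  show "vge v ((d - c*b/a) - 1) n"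
    unfolding eq by (rule vge_diff[OF h(4) cb])
qed

end

locale nonarch_local =
  fixes v :: "'a::field \<Rightarrow> int" and p :: nat
  assumes local_field: "nonarch_local_field v p"

sublocale nonarch_local \<subseteq> discretely_valued
  using local_field by unfold_locales (simp add: nonarch_local_field_def)

context nonarch_local
begin

lemma cauchy_convergent:
  fixes s :: "nat \<Rightarrow> 'a"
  assumes "\<forall>n. \<exists>N. \<forall>i\<ge>N. \<forall>j\<ge>N. vge v (s i - s j) n"
  shows "\<exists>L. \<forall>n. \<exists>N. \<forall>i\<ge>N. vge v (s i - L) n"
proof -
  have "\<forall>s :: nat \<Rightarrow> 'a. (\<forall>n. \<exists>N. \<forall>i\<ge>N. \<forall>j\<ge>N. vge v (s i - s j) n) \<longrightarrow>
      (\<exists>L. \<forall>n. \<exists>N. \<forall>i\<ge>N. vge v (s i - L) n)"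
    using local_field by (simp add: nonarch_local_field_def)
  then show ?thesis
    using assms by blast
qed

lemma residue_digits:
  obtains R where "finite R" "\<forall>r\<in>R. vge v r 0"
    "\<forall>x c j. vge v (x - c) j \<longrightarrow> (\<exists>r\<in>R. vge v (x - c - unif_pow j * r) (j + 1))"
proof -
  obtain R where R: "finite R" "R \<subseteq> {x. vge v x 0}" "\<forall>x. vge v x 0 \<longrightarrow> (\<exists>r\<in>R. vge v (x - r) 1)"
    using local_field unfolding nonarch_local_field_def by blast
  have "\<exists>r\<in>R. vge v (x - c - unif_pow j * r) (j + 1)" if xc: "vge v (x - c) j" for x c j
  proof -
    have "vge v ((x - c) / unif_pow j) 0"
      using xc by (simp add: vge_divide_iff)
    then obtain r where r: "r \<in> R" "vge v ((x - c) / unif_pow j - r) 1"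
      using R(3) by blast
    have "(x - c) / unif_pow j - r = (x - c - unif_pow j * r) / unif_pow j"
      by (simp add: field_simps)
    then show ?thesis
      using r by (auto simp: vge_divide_iff add.commute)
  qed
  then show thesis
    using R that by blast
qed

lemma limit_of_increments:
  assumes inc: "\<And>n. vge v (s (Suc n) - s n) (a + int n)"
  shows "\<exists>L. \<forall>n. vge v (s n - L) (a + int n)"
proof -
  have cauchy: "vge v (s i - s j) (a + int j)" if "j \<le> i" for i j
    using that
  proof (induction rule: dec_induct)
    case (step i)
    then have "vge v ((s (Suc i) - s i) + (s i - s j)) (a + int j)"
      using vge_mono[OF inc[of i], of "a + int j"] by (intro vge_add) auto
    then show ?case
      by simp
  qed simp
  have "\<exists>N. \<forall>i\<ge>N. \<forall>j\<ge>N. vge v (s i - s j) n" for n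
  proof (intro exI allI impI)
    fix i j assume "nat (n - a) \<le> i" "nat (n - a) \<le> j"
    then show "vge v (s i - s j) n"
      using cauchy[of i j] cauchy[of j i] vge_diff_commute
      by (cases "j \<le> i") (auto elim!: vge_mono)
  qed
  then obtain L where L: "\<forall>n. \<exists>N. \<forall>i\<ge>N. vge v (s i - L) n"
    using cauchy_convergent by blast
  have "vge v (s n - L) (a + int n)" for n
  proof -
    obtain N where N: "\<forall>i\<ge>N. vge v (s i - L) (a + int n)"
      using L by blast
    have "vge v ((s n - s (max N n)) + (s (max N n) - L)) (a + int n)"
      using cauchy[of n "max N n"] N vge_diff_commute by (intro vge_add) auto
    then show ?thesis
      by simp
  qed
  then show ?thesis
    by blast
qed

definition uniformly_locally_constant_on_ball :: "('a \<Rightarrow> 'b) \<Rightarrow> 'a \<Rightarrow> int \<Rightarrow> bool" where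
  "uniformly_locally_constant_on_ball h c j \<longleftrightarrow> (\<exists>k. \<forall>x y. vge v (x - c) j \<longrightarrow> vge v (y - x) k \<longrightarrow> h y = h x)"

lemma uniformly_locally_constant_on_ball_refine:
  assumes R: "finite R"
    and digits: "\<And>x. vge v (x - c) j \<Longrightarrow> \<exists>r\<in>R. vge v (x - c - unif_pow j * r) (j + 1)"
    and lc: "\<forall>r\<in>R. uniformly_locally_constant_on_ball h (c + unif_pow j * r) (j + 1)"
  shows "uniformly_locally_constant_on_ball h c j"
proof -
  obtain k where k: "\<forall>r\<in>R. \<forall>x y. vge v (x - (c + unif_pow j * r)) (j + 1) \<longrightarrow>
      vge v (y - x) (k r) \<longrightarrow> h y = h x"
    using lc unfolding uniformly_locally_constant_on_ball_def by metis
  define K where "K = Max (insert 0 (k ` R))"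
  have "h y = h x" if xc: "vge v (x - c) j" and yx: "vge v (y - x) K" for x y
  proof -
    obtain r where "r \<in> R" "vge v (x - (c + unif_pow j * r)) (j + 1)"
      using digits[OF xc] by (auto simp: diff_diff_eq)
    moreover have "vge v (y - x) (k r)"
      using yx \<open>r \<in> R\<close> R by (auto simp: K_def elim!: vge_mono)
    ultimately show ?thesis
      using k by blast
  qed
  then show ?thesis
    unfolding uniformly_locally_constant_on_ball_def by blast
qed

text \<open>Compactness of the ball, in the form of a digit-by-digit bisection: were \<open>h\<close> not
  uniformly locally constant on it, some residue digit would keep the defect at every level,
  and the limit of the resulting digit expansion would be a point where \<open>h\<close> is not locally
  constant.\<close>

lemma locally_constant_imp_uniformly_on_ball:
  assumes lc: "\<forall>x. \<exists>n. \<forall>y. vge v (y - x) n \<longrightarrow> h y = h x"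
  shows "uniformly_locally_constant_on_ball h c a"
proof (rule ccontr)
  obtain R where R: "finite R" "\<forall>r\<in>R. vge v r 0"
    "\<forall>x c j. vge v (x - c) j \<longrightarrow> (\<exists>r\<in>R. vge v (x - c - unif_pow j * r) (j + 1))"
    by (rule residue_digits)
  have "\<exists>r\<in>R. \<not> uniformly_locally_constant_on_ball h (c + unif_pow j * r) (j + 1)"
    if "\<not> uniformly_locally_constant_on_ball h c j" for c j
    using uniformly_locally_constant_on_ball_refine[OF R(1), of c j h] R(3) that by blast
  then obtain dig where dig: "\<And>c j. \<not> uniformly_locally_constant_on_ball h c j \<Longrightarrow>
      dig c j \<in> R \<and> \<not> uniformly_locally_constant_on_ball h (c + unif_pow j * dig c j) (j + 1)"
    by metis
  define s where "s = rec_nat c (\<lambda>n x. x + unif_pow (a + int n) * dig x (a + int n))"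
  have s: "s 0 = c" "s (Suc n) = s n + unif_pow (a + int n) * dig (s n) (a + int n)" for n
    by (simp_all add: s_def)
  assume not_lc: "\<not> uniformly_locally_constant_on_ball h c a"
  have bad: "\<not> uniformly_locally_constant_on_ball h (s n) (a + int n)" for n
  proof (induction n)
    case 0
    show ?case
      using not_lc by (simp add: s)
  next
    case (Suc n)
    have "a + int (Suc n) = a + int n + 1"
      by simp
    then show ?case
      using dig[OF Suc] unfolding s by metis
  qed
  have "vge v (s (Suc n) - s n) (a + int n)" for n
    using dig[OF bad[of n]] R(2) by (simp add: s vge_unif_pow_mult)
  then obtain L where L: "\<And>n. vge v (s n - L) (a + int n)"
    using limit_of_increments by blast
  obtain n0 where n0: "\<forall>y. vge v (y - L) n0 \<longrightarrow> h y = h L"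
    using lc by blast
  define i where "i = nat (n0 - a)"
  obtain x y where xy: "vge v (x - s i) (a + int i)" "vge v (y - x) n0" "h y \<noteq> h x"
    using bad[of i] unfolding uniformly_locally_constant_on_ball_def by blast
  have "vge v ((x - s i) + (s i - L)) n0"
    using xy(1) L[of i] by (intro vge_add) (auto simp: i_def elim!: vge_mono)
  then have xL: "vge v (x - L) n0"
    by simp
  then have "vge v (y - L) n0"
    using vge_add[OF xy(2) xL] by simp
  then show False
    using xL n0 xy(3) by metis
qed

lemma ball_finite_cover:
  "\<exists>C. finite C \<and> (\<forall>c\<in>C. vge v c a) \<and> (\<forall>x. vge v x a \<longrightarrow> (\<exists>c\<in>C. vge v (x - c) (a + int n)))"
proof (induction n)
  case 0
  show ?case
    by (intro exI[of _ "{0}"]) auto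
next
  case (Suc n)
  then obtain C where C: "finite C" "\<forall>c\<in>C. vge v c a"
      "\<forall>x. vge v x a \<longrightarrow> (\<exists>c\<in>C. vge v (x - c) (a + int n))"
    by blast
  obtain R where R: "finite R" "\<forall>r\<in>R. vge v r 0"
    "\<forall>x c j. vge v (x - c) j \<longrightarrow> (\<exists>r\<in>R. vge v (x - c - unif_pow j * r) (j + 1))"
    by (rule residue_digits)
  define C' where "C' = (\<lambda>(c, r). c + unif_pow (a + int n) * r) ` (C \<times> R)"
  have "finite C'"
    using C(1) R(1) by (simp add: C'_def)
  moreover have "\<forall>c\<in>C'. vge v c a"
  proof
    fix c' assume "c' \<in> C'"
    then obtain c r where "c \<in> C" "r \<in> R" "c' = c + unif_pow (a + int n) * r"
      by (auto simp: C'_def)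
    then show "vge v c' a"
      using C(2) R(2) vge_mono[of r 0 "- int n"] by (auto simp: vge_unif_pow_mult intro: vge_add)
  qed
  moreover have "\<exists>c\<in>C'. vge v (x - c) (a + int (Suc n))" if x: "vge v x a" for x
  proof -
    obtain c where c: "c \<in> C" "vge v (x - c) (a + int n)"
      using C(3) x by blast
    obtain r where "r \<in> R" "vge v (x - c - unif_pow (a + int n) * r) (a + int n + 1)"
      using R(3) c(2) by blast
    then show ?thesis
      using c(1) by (intro bexI[of _ "c + unif_pow (a + int n) * r"])
        (auto simp: C'_def diff_diff_eq add_ac)
  qed
  ultimately show ?case
    by blast
qed

lemma ball_coset_reps:
  assumes "a \<le> b"
  shows "\<exists>R. finite R \<and> (\<forall>c\<in>R. vge v c a) \<and> (\<forall>x. vge v x a \<longrightarrow> (\<exists>!c. c \<in> R \<and> vge v (x - c) b))"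
proof -
  obtain C where C: "finite C" "\<forall>c\<in>C. vge v c a" "\<forall>x. vge v x a \<longrightarrow> (\<exists>c\<in>C. vge v (x - c) b)"
    using ball_finite_cover[of a "nat (b - a)"] assms by auto
  define sel where "sel x = (SOME c. c \<in> C \<and> vge v (x - c) b)" for x
  have sel: "sel x \<in> C \<and> vge v (x - sel x) b" if "vge v x a" for x
    unfolding sel_def by (rule someI_ex) (use C(3) that in blast)
  have sel_cong: "sel x = sel y" if "vge v (x - y) b" for x y
  proof -
    have "vge v (x - c) b \<longleftrightarrow> vge v (y - c) b" for c
      using vge_trans[of x y b c] vge_trans[of y x b c] that vge_diff_commute by blast
    then show ?thesis
      by (simp add: sel_def)
  qed
  define R where "R = sel ` C"
  have "\<exists>!c. c \<in> R \<and> vge v (x - c) b" if x: "vge v x a" for x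
  proof -
    obtain c where c: "c \<in> C" "vge v (x - c) b"
      using C(3) x by blast
    have "sel c \<in> R \<and> vge v (x - sel c) b"
      using sel[of c] C(2) c vge_trans by (auto simp: R_def)
    moreover have "c' = sel c" if c': "c' \<in> R" "vge v (x - c') b" for c'
    proof -
      obtain c'' where c'': "c'' \<in> C" "c' = sel c''"
        using c'(1) by (auto simp: R_def)
      have "vge v (c'' - c') b"
        using sel[of c''] C(2) c'' by simp
      then have "vge v (c'' - c) b"
        using vge_trans vge_diff_commute c'(2) c(2) by meson
      then show ?thesis
        using sel_cong c'' by simp
    qed
    ultimately show ?thesis
      by blast
  qed
  moreover have "finite R" "\<forall>c\<in>R. vge v c a"
    using C sel by (auto simp: R_def)
  ultimately show ?thesis
    by blast
qed

end

section \<open>The induced representation\<close>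

locale induced = nonarch_local v p for v :: "'a::field \<Rightarrow> int" and p +
  fixes chi :: "'a \<Rightarrow> 'a \<Rightarrow> 'k::field"
  assumes smooth_character: "smooth_character v chi"
begin

abbreviation "V \<equiv> Ind v chi"
abbreviation "K \<equiv> congr_sub v"
abbreviation rt where "rt \<equiv> right_transl"

definition level :: int where
  "level = (SOME n. 1 \<le> n \<and> (\<forall>a d. vge v (a - 1) n \<longrightarrow> vge v (d - 1) n \<longrightarrow> chi a d = 1))"

lemma level: "1 \<le> level" "vge v (a - 1) level \<Longrightarrow> vge v (d - 1) level \<Longrightarrow> chi a d = 1"
proof -
  have "\<exists>n. 1 \<le> n \<and> (\<forall>a d. vge v (a - 1) n \<longrightarrow> vge v (d - 1) n \<longrightarrow> chi a d = 1)"
    using smooth_character by (auto simp: smooth_character_def)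
  then have "1 \<le> level \<and> (\<forall>a d. vge v (a - 1) level \<longrightarrow> vge v (d - 1) level \<longrightarrow> chi a d = 1)"
    unfolding level_def by (rule someI_ex)
  then show "1 \<le> level" "vge v (a - 1) level \<Longrightarrow> vge v (d - 1) level \<Longrightarrow> chi a d = 1"
    by auto
qed

lemma unit_near_one_level: "vge v (a - 1) level \<Longrightarrow> a \<noteq> 0 \<and> v a = 0"
  using unit_near_one level(1) by blast

lemma chi_mult:
  "a \<noteq> 0 \<Longrightarrow> d \<noteq> 0 \<Longrightarrow> a' \<noteq> 0 \<Longrightarrow> d' \<noteq> 0 \<Longrightarrow> chi (a * a') (d * d') = chi a d * chi a' d'"
  using smooth_character by (simp add: smooth_character_def)

lemma chi_nonzero: "a \<noteq> 0 \<Longrightarrow> d \<noteq> 0 \<Longrightarrow> chi a d \<noteq> 0"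
  using smooth_character by (simp add: smooth_character_def)

lemma chi_mult_level:
  assumes "vge v (a - 1) level" "vge v (d - 1) level" "a' \<noteq> 0" "d' \<noteq> 0"
  shows "chi (a * a') (d * d') = chi a' d'"
  using assms chi_mult level(2) unit_near_one_level by simp

lemma Ind_memI:
  assumes "\<And>g. g \<in> GL2 \<Longrightarrow> \<exists>n\<ge>1. \<forall>k\<in>K n. f (g ** k) = f g"
    and "\<And>x. x \<notin> GL2 \<Longrightarrow> f x = 0"
    and "\<And>b g. b \<in> Borel \<Longrightarrow> g \<in> GL2 \<Longrightarrow> f (b ** g) = chi (b $ 1 $ 1) (b $ 2 $ 2) * f g"
  shows "f \<in> V"
  using assms by (auto simp: Ind_def loc_const_G_def)

lemma Ind_locally_constant: "f \<in> V \<Longrightarrow> g \<in> GL2 \<Longrightarrow> \<exists>n\<ge>1. \<forall>k\<in>K n. f (g ** k) = f g"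
  by (auto simp: Ind_def loc_const_G_def)

lemma Ind_outside_GL2: "f \<in> V \<Longrightarrow> x \<notin> GL2 \<Longrightarrow> f x = 0"
  by (auto simp: Ind_def)

lemma Ind_Borel_left:
  "f \<in> V \<Longrightarrow> b \<in> Borel \<Longrightarrow> g \<in> GL2 \<Longrightarrow> f (b ** g) = chi (b $ 1 $ 1) (b $ 2 $ 2) * f g"
  by (auto simp: Ind_def)

lemma Ind_Borel: "f \<in> V \<Longrightarrow> b \<in> Borel \<Longrightarrow> f b = chi (b $ 1 $ 1) (b $ 2 $ 2) * f (mat 1)"
  using Ind_Borel_left[of f b "mat 1"] by simp

lemma Ind_big_cell:
  assumes "f \<in> V" "c \<noteq> 0" "a*d - b*c \<noteq> 0"
  shows "f (mat2 a b c d) = chi (- (a*d - b*c) / c) c * f (mat2 0 1 1 (d / c))"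
proof -
  have "weyl ** upper (d / c) = mat2 0 1 1 (d / c)"
    by (simp add: weyl_def upper_def)
  then show ?thesis
    using Ind_Borel_left[OF assms(1), of "mat2 (- (a*d - b*c) / c) a 0 c" "weyl ** upper (d / c)"]
      Borel_weyl_upper_factor[OF assms(2), of a b d] assms by (simp add: GL2_mult)
qed

lemma Ind_eqI:
  "f \<in> V \<Longrightarrow> (\<And>g. g \<in> GL2 \<Longrightarrow> f' g = f g) \<Longrightarrow> (\<And>g. g \<notin> GL2 \<Longrightarrow> f' g = 0) \<Longrightarrow> f' = f"
  using Ind_outside_GL2 by (auto simp: fun_eq_iff) metis

lemma Ind_add:
  assumes "f1 \<in> V" "f2 \<in> V"
  shows "(\<lambda>x. f1 x + f2 x) \<in> V"
proof (rule Ind_memI)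
  fix g :: "'a^2^2" assume g: "g \<in> GL2"
  obtain n1 n2 where n: "n1 \<ge> 1" "\<forall>k\<in>K n1. f1 (g ** k) = f1 g" "\<forall>k\<in>K n2. f2 (g ** k) = f2 g"
    using Ind_locally_constant[OF assms(1) g] Ind_locally_constant[OF assms(2) g] by blast
  have "k \<in> K n1" "k \<in> K n2" if "k \<in> K (max n1 n2)" for k
    using that congr_sub_mono[of n1 "max n1 n2"] congr_sub_mono[of n2 "max n1 n2"] by auto
  then show "\<exists>n\<ge>1. \<forall>k\<in>K n. f1 (g ** k) + f2 (g ** k) = f1 g + f2 g"
    using n by (intro exI[of _ "max n1 n2"]) auto
qed (use assms in \<open>auto simp: Ind_outside_GL2 Ind_Borel_left algebra_simps\<close>)

lemma Ind_scale:
  assumes "f \<in> V"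
  shows "(\<lambda>x. c * f x) \<in> V"
proof (rule Ind_memI)
  fix g :: "'a^2^2" assume g: "g \<in> GL2"
  then show "\<exists>n\<ge>1. \<forall>k\<in>K n. c * f (g ** k) = c * f g"
    using Ind_locally_constant[OF assms g] by metis
qed (use assms in \<open>auto simp: Ind_outside_GL2 Ind_Borel_left\<close>)

lemma Ind_diff: "f1 \<in> V \<Longrightarrow> f2 \<in> V \<Longrightarrow> (\<lambda>x. f1 x - f2 x) \<in> V"
  using Ind_add[OF _ Ind_scale, of f1 f2 "-1"] by simp

lemma Ind_sum: "finite A \<Longrightarrow> (\<And>i. i \<in> A \<Longrightarrow> F i \<in> V) \<Longrightarrow> (\<lambda>x. \<Sum>i\<in>A. F i x) \<in> V"
proof (induction A rule: finite_induct)
  case empty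
  show ?case
    using Ind_scale[of "\<lambda>x. 0" 0] by (auto intro: Ind_memI)
qed (auto intro: Ind_add)

lemma right_transl_mult: "g \<in> GL2 \<Longrightarrow> h \<in> GL2 \<Longrightarrow> rt g (rt h f) = rt (g ** h) f"
  by (auto simp: right_transl_def fun_eq_iff GL2_mult matrix_mul_assoc)

lemma right_transl_one: "f \<in> V \<Longrightarrow> rt (mat 1) f = f"
  by (auto simp: right_transl_def fun_eq_iff Ind_outside_GL2)

lemma right_transl_linear:
  fixes f f1 f2 :: "'a^2^2 \<Rightarrow> 'k" and F :: "'i \<Rightarrow> 'a^2^2 \<Rightarrow> 'k"
  shows "rt h (\<lambda>x. f1 x - f2 x) = (\<lambda>x. rt h f1 x - rt h f2 x)"
  "rt h (\<lambda>x. c * f x) = (\<lambda>x. c * rt h f x)"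
  "rt h (\<lambda>x. \<Sum>i\<in>A. F i x) = (\<lambda>x. \<Sum>i\<in>A. rt h (F i) x)"
  by (auto simp: right_transl_def fun_eq_iff)

lemma right_transl_Ind:
  assumes f: "f \<in> V" and h: "h \<in> GL2"
  shows "rt h f \<in> V"
proof (rule Ind_memI)
  fix g :: "'a^2^2" assume g: "g \<in> GL2"
  obtain h' where h': "h ** h' = mat 1" "h' ** h = mat 1"
    using GL2_inverse[OF h] by blast
  obtain n where n: "\<forall>k\<in>K n. f (g ** h ** k) = f (g ** h)"
    using Ind_locally_constant[OF f GL2_mult[OF g h]] by blast
  obtain N where N: "N \<ge> 1" "\<forall>k\<in>K N. h' ** k ** h \<in> K n"
    using congr_sub_conj[OF h'] by blast
  have "rt h f (g ** k) = rt h f g" if k: "k \<in> K N" for k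
  proof -
    have "g ** h ** (h' ** k ** h) = g ** (h ** h') ** k ** h"
      by (simp add: matrix_mul_assoc)
    then have "g ** k ** h = g ** h ** (h' ** k ** h)"
      using h'(1) by simp
    then have "f (g ** k ** h) = f (g ** h)"
      using n N k by simp
    then show ?thesis
      using g congr_sub_GL2[OF N(1) k] by (simp add: right_transl_def GL2_mult)
  qed
  then show "\<exists>n\<ge>1. \<forall>k\<in>K n. rt h f (g ** k) = rt h f g"
    using N(1) by blast
next
  fix b g :: "'a^2^2" assume b: "b \<in> Borel" and g: "g \<in> GL2"
  have "f (b ** g ** h) = chi (b $ 1 $ 1) (b $ 2 $ 2) * f (g ** h)"
    using Ind_Borel_left[OF f b GL2_mult[OF g h]] by (simp add: matrix_mul_assoc)
  then show "rt h f (b ** g) = chi (b $ 1 $ 1) (b $ 2 $ 2) * rt h f g"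
    using g GL2_mult[OF Borel_GL2[OF b] g] by (simp add: right_transl_def)
qed (simp add: right_transl_def)

end

section \<open>Functions on the big cell\<close>

context induced
begin

lemma chi_one [simp]: "chi 1 1 = 1"
  using chi_mult[of 1 1 1 1] chi_nonzero[of 1 1] by simp

text \<open>For \<open>c = g$2$1 \<noteq> 0\<close> one has \<open>g = (-det g/c, a; 0, c) * weyl * upper (d/c)\<close>
  (lemma \<open>Borel_weyl_upper_factor\<close>), so \<open>cell_ind k\<close> is the element of \<open>Ind\<close> supported on
  \<open>P weyl U_k\<close> that is \<open>1\<close> on \<open>weyl U_k\<close>, where \<open>U_k = {upper x | v x \<ge> k}\<close>.\<close>

definition cell_ind :: "int \<Rightarrow> 'a^2^2 \<Rightarrow> 'k" where
  "cell_ind k g = (if g \<in> GL2 \<and> g$2$1 \<noteq> 0 \<and> vge v (g$2$2 / g$2$1) k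
     then chi (- det g / g$2$1) (g$2$1) else 0)"

lemma cell_ind_mat2:
  "cell_ind k (mat2 a b c d) =
    (if a*d - b*c \<noteq> 0 \<and> c \<noteq> 0 \<and> vge v (d / c) k then chi (- (a*d - b*c) / c) c else 0)"
  by (simp add: cell_ind_def)

lemma cell_ind_weyl_line [simp]: "cell_ind k (mat2 0 1 1 x) = (if vge v x k then 1 else 0)"
  by (simp add: cell_ind_mat2)

lemma cell_ind_Borel [simp]: "cell_ind k (mat2 a b 0 d) = 0"
  by (simp add: cell_ind_mat2)

lemma cell_ind_right_unit_Borel:
  assumes g: "g \<in> GL2" and al: "vge v (al - 1) level" and de: "vge v (de - 1) level"
    and be: "vge v be k"
  shows "cell_ind k (g ** mat2 al be 0 de) = cell_ind k g"
proof -
  obtain a b c d where gd: "g = mat2 a b c d"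
    by (rule mat2_cases)
  have D: "a*d - b*c \<noteq> 0"
    using g gd by simp
  have ua: "al \<noteq> 0" "v al = 0" and ud: "de \<noteq> 0" "v de = 0"
    using unit_near_one_level[OF al] unit_near_one_level[OF de] by auto
  have prod: "g ** mat2 al be 0 de = mat2 (a*al) (a*be + b*de) (c*al) (c*be + d*de)"
    by (simp add: gd)
  have det: "(a*al) * (c*be + d*de) - (a*be + b*de) * (c*al) = (a*d - b*c) * (al*de)"
    by (simp add: algebra_simps)
  show ?thesis
  proof (cases "c = 0")
    case False
    have "(c*be + d*de) / (c*al) = (be + (d/c) * de) / al"
      using False ua by (simp add: field_simps)
    moreover have "vge v (be + (d/c) * de) k \<longleftrightarrow> vge v ((d/c) * de) k"
      using vge_congruent[of "be + (d/c) * de" "(d/c) * de" k] be by (simp only: add_diff_cancel_right')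
    moreover have "vge v ((d/c) * de) k \<longleftrightarrow> vge v (d/c) k"
      by (rule vge_mult_unit[OF ud])
    ultimately have cond: "vge v ((c*be + d*de) / (c*al)) k \<longleftrightarrow> vge v (d/c) k"
      using vge_divide_unit[OF ua] by simp
    have "- ((a*d - b*c) * (al*de)) / (c*al) = de * (- (a*d - b*c) / c)"
      using False ua by (simp add: field_simps)
    then have "chi (- ((a*d - b*c) * (al*de)) / (c*al)) (c*al) = chi (de * (- (a*d - b*c) / c)) (al * c)"
      by (simp add: mult.commute)
    also have "\<dots> = chi (- (a*d - b*c) / c) c"
      using False D by (intro chi_mult_level[OF de al]) auto
    finally show ?thesis
      unfolding prod cell_ind_mat2 det unfolding gd cell_ind_mat2 using False D ua ud cond by simp
  qed (simp add: prod gd cell_ind_mat2)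
qed

lemma cell_ind_right_lower:
  assumes g: "g \<in> GL2" and y: "vge v y (level - k)"
  shows "cell_ind k (g ** lower y) = cell_ind k g"
proof -
  obtain a b c d where gd: "g = mat2 a b c d"
    by (rule mat2_cases)
  have D: "a*d - b*c \<noteq> 0"
    using g gd by simp
  have prod: "g ** lower y = mat2 (a + b*y) b (c + d*y) d"
    by (simp add: gd lower_def)
  have det: "(a + b*y) * d - b * (c + d*y) = a*d - b*c"
    by (simp add: algebra_simps)
  have "vge v y (1 - k)"
    using vge_mono[OF y] level(1) by simp
  then have cond: "(c \<noteq> 0 \<and> vge v (d/c) k) \<longleftrightarrow> (c + d*y \<noteq> 0 \<and> vge v (d / (c + d*y)) k)"
    by (rule ratio_ball_lower_shift)
  show ?thesis
  proof (cases "c \<noteq> 0 \<and> vge v (d/c) k")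
    case True
    define e where "e = (d/c) * y"
    have "vge v e level"
      using vge_mult[of "d/c" k y "level - k"] True y by (simp add: e_def)
    then have i1: "vge v ((1 + e) - 1) level" and u: "1 + e \<noteq> 0"
      using unit_near_one_level[of "1 + e"] by auto
    have "vge v (inverse (1 + e) - 1) level"
    proof -
      have "inverse (1 + e) - 1 = - e / (1 + e)"
        using u by (simp add: field_simps)
      then show ?thesis
        using i1 unit_near_one_level[of "1 + e"] by (simp add: vge_divide_unit)
    qed
    moreover have "c + d*y = (1 + e) * c"
      using True by (simp add: e_def field_simps)
    ultimately have "chi (- (a*d - b*c) / (c + d*y)) (c + d*y) = chi (- (a*d - b*c) / c) c"
      using chi_mult_level[of "inverse (1 + e)" "1 + e" "- (a*d - b*c) / c" c] i1 True D u
      by (simp add: field_simps)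
    then show ?thesis
      unfolding prod cell_ind_mat2 det unfolding gd cell_ind_mat2 using True D cond by simp
  next
    case False
    then show ?thesis
      unfolding prod cell_ind_mat2 det unfolding gd cell_ind_mat2 using cond by auto
  qed
qed

lemma cell_ind_left_Borel:
  assumes b: "b \<in> Borel" and g: "g \<in> GL2"
  shows "cell_ind k (b ** g) = chi (b $ 1 $ 1) (b $ 2 $ 2) * cell_ind k g"
proof -
  obtain al be de where bd: "b = mat2 al be 0 de" and nz: "al \<noteq> 0" "de \<noteq> 0"
    using b by (cases b rule: mat2_cases) auto
  obtain a' b' c' d' where gd: "g = mat2 a' b' c' d'"
    by (rule mat2_cases)
  have D: "a'*d' - b'*c' \<noteq> 0"
    using g gd by simp
  have prod: "b ** g = mat2 (al*a' + be*c') (al*b' + be*d') (de*c') (de*d')"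
    by (simp add: bd gd)
  have det: "(al*a' + be*c') * (de*d') - (al*b' + be*d') * (de*c') = (al*de) * (a'*d' - b'*c')"
    by (simp add: algebra_simps)
  show ?thesis
  proof (cases "c' = 0")
    case False
    have "- ((al*de) * (a'*d' - b'*c')) / (de*c') = al * (- (a'*d' - b'*c') / c')"
      using nz False by (simp add: field_simps)
    then have "chi (- ((al*de) * (a'*d' - b'*c')) / (de*c')) (de*c') =
        chi (al * (- (a'*d' - b'*c') / c')) (de * c')"
      by simp
    also have "\<dots> = chi al de * chi (- (a'*d' - b'*c') / c') c'"
      by (rule chi_mult) (use nz False D in auto)
    finally have "chi (- ((al*de) * (a'*d' - b'*c')) / (de*c')) (de*c') =
        chi al de * chi (- (a'*d' - b'*c') / c') c'" .
    then show ?thesis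
      unfolding prod cell_ind_mat2 det unfolding bd gd cell_ind_mat2 using False nz D by simp
  next
    case True
    then show ?thesis
      unfolding prod unfolding gd by (simp add: cell_ind_mat2)
  qed
qed

lemma cell_ind_Ind: "cell_ind k \<in> V"
proof (rule Ind_memI)
  fix g :: "'a^2^2" assume g: "g \<in> GL2"
  define N where "N = max 1 (max k (max level (level - k)))"
  have "cell_ind k (g ** \<kappa>) = cell_ind k g" if \<kappa>: "\<kappa> \<in> K N" for \<kappa>
  proof -
    obtain a b c d where \<kappa>d: "\<kappa> = mat2 a b c d"
      by (rule mat2_cases)
    have N1: "1 \<le> N"
      by (simp add: N_def)
    note F = congr_sub_lower_Borel_factor[OF N1 \<kappa>[unfolded \<kappa>d]]
    have gL: "g ** lower (c/a) \<in> GL2"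
      using g by (simp add: GL2_mult)
    have "cell_ind k (g ** \<kappa>) = cell_ind k ((g ** lower (c/a)) ** mat2 a b 0 (d - c*b/a))"
      using F(1) \<kappa>d by (simp add: matrix_mul_assoc)
    also have "\<dots> = cell_ind k (g ** lower (c/a))"
      by (rule cell_ind_right_unit_Borel[OF gL]) (use F in \<open>auto elim: vge_mono simp: N_def\<close>)
    also have "\<dots> = cell_ind k g"
      by (rule cell_ind_right_lower[OF g]) (use F in \<open>auto elim: vge_mono simp: N_def\<close>)
    finally show ?thesis .
  qed
  then show "\<exists>n\<ge>1. \<forall>\<kappa>\<in>K n. cell_ind k (g ** \<kappa>) = cell_ind k g"
    by (intro exI[of _ N]) (auto simp: N_def)
next
  fix x :: "'a^2^2" assume "x \<notin> GL2"
  then show "cell_ind k x = 0"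
    by (simp add: cell_ind_def)
next
  fix b g :: "'a^2^2" assume "b \<in> Borel" "g \<in> GL2"
  then show "cell_ind k (b ** g) = chi (b $ 1 $ 1) (b $ 2 $ 2) * cell_ind k g"
    by (rule cell_ind_left_Borel)
qed

lemma right_transl_diag_cell_ind:
  "rt (mat2 (unif_pow j) 0 0 1) (cell_ind k) = (\<lambda>g. chi 1 (unif_pow j) * cell_ind (k + j) g)"
proof
  fix g :: "'a^2^2"
  obtain a b c d where gd: "g = mat2 a b c d"
    by (rule mat2_cases)
  show "rt (mat2 (unif_pow j) 0 0 1) (cell_ind k) g = chi 1 (unif_pow j) * cell_ind (k + j) g"
  proof (cases "g \<in> GL2 \<and> c \<noteq> 0")
    case True
    then have D: "a*d - b*c \<noteq> 0" and c: "c \<noteq> 0"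
      using gd by auto
    have prod: "g ** mat2 (unif_pow j) 0 0 1 = mat2 (a * unif_pow j) b (c * unif_pow j) d"
      by (simp add: gd)
    have det: "a * unif_pow j * d - b * (c * unif_pow j) = (a*d - b*c) * unif_pow j"
      by (simp add: algebra_simps)
    have cond: "vge v (d / (c * unif_pow j)) k \<longleftrightarrow> vge v (d/c) (k + j)"
      using vge_divide_iff[of "unif_pow j" "d/c" k] by (simp add: mult.commute)
    have "- ((a*d - b*c) * unif_pow j) / (c * unif_pow j) = 1 * (- (a*d - b*c) / c)"
      using c by (simp add: field_simps)
    then have "chi (- ((a*d - b*c) * unif_pow j) / (c * unif_pow j)) (c * unif_pow j) =
        chi 1 (unif_pow j) * chi (- (a*d - b*c) / c) c"
      using c D chi_mult[of 1 "unif_pow j" "- (a*d - b*c) / c" c] by (simp add: mult.commute)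
    then show ?thesis
      using True D c cond unfolding right_transl_def prod cell_ind_mat2 det by (simp add: gd cell_ind_mat2)
  qed (auto simp: right_transl_def gd cell_ind_mat2)
qed

lemma Ind_weyl_line_vanishes:
  assumes f: "f \<in> V" and f1: "f (mat 1) = 0"
  shows "\<exists>a. \<forall>x. \<not> vge v x a \<longrightarrow> f (mat2 0 1 1 x) = 0"
proof -
  obtain n where n: "\<forall>\<kappa>\<in>K n. f (mat 1 ** \<kappa>) = f (mat 1)"
    using Ind_locally_constant[OF f mat1_GL2] by blast
  have "f (mat2 0 1 1 x) = 0" if x: "\<not> vge v x (1 - n)" for x
  proof -
    have x0: "x \<noteq> 0"
      using x by auto
    then have "lower (1/x) \<in> K n"
      using x by (simp add: lower_def congr_sub_mat2 vge_iff v_divide)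
    then have "f (lower (1/x)) = 0"
      using n f1 by simp
    moreover have "mat2 0 1 1 x = mat2 (-1/x) 1 0 x ** lower (1/x)"
      using x0 by (simp add: lower_def)
    ultimately show ?thesis
      using Ind_Borel_left[OF f, of "mat2 (-1/x) 1 0 x" "lower (1/x)"] x0 by simp
  qed
  then show ?thesis
    by blast
qed

lemma Ind_weyl_line_uniformly_locally_constant:
  assumes f: "f \<in> V"
  shows "uniformly_locally_constant_on_ball (\<lambda>x. f (mat2 0 1 1 x)) 0 a"
proof (rule locally_constant_imp_uniformly_on_ball, intro allI)
  fix x
  obtain m where m: "\<forall>\<kappa>\<in>K m. f (mat2 0 1 1 x ** \<kappa>) = f (mat2 0 1 1 x)"
    using Ind_locally_constant[OF f, of "mat2 0 1 1 x"] by auto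
  have "f (mat2 0 1 1 y) = f (mat2 0 1 1 x)" if "vge v (y - x) m" for y
  proof -
    have "upper (y - x) \<in> K m"
      using that by (simp add: upper_def congr_sub_mat2)
    moreover have "mat2 0 1 1 x ** upper (y - x) = mat2 0 1 1 y"
      by (simp add: upper_def)
    ultimately show ?thesis
      using m by force
  qed
  then show "\<exists>n. \<forall>y. vge v (y - x) n \<longrightarrow> f (mat2 0 1 1 y) = f (mat2 0 1 1 x)"
    by blast
qed

lemma Ind_weyl_line_compact_periodic:
  assumes f: "f \<in> V" and f1: "f (mat 1) = 0"
  shows "\<exists>a b. a \<le> b \<and> (\<forall>x. \<not> vge v x a \<longrightarrow> f (mat2 0 1 1 x) = 0) \<and>
    (\<forall>x y. vge v (x - y) b \<longrightarrow> f (mat2 0 1 1 x) = f (mat2 0 1 1 y))"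
proof -
  obtain a where a: "\<forall>x. \<not> vge v x a \<longrightarrow> f (mat2 0 1 1 x) = 0"
    using Ind_weyl_line_vanishes[OF f f1] by blast
  obtain k where k: "\<forall>x y. vge v x a \<longrightarrow> vge v (y - x) k \<longrightarrow> f (mat2 0 1 1 y) = f (mat2 0 1 1 x)"
    using Ind_weyl_line_uniformly_locally_constant[OF f, of a] by (auto simp: uniformly_locally_constant_on_ball_def)
  have "f (mat2 0 1 1 x) = f (mat2 0 1 1 y)" if xy: "vge v (x - y) (max k a)" for x y
  proof -
    have "vge v (x - y) k" "vge v (x - y) a"
      using vge_mono[OF xy, of k] vge_mono[OF xy, of a] by simp_all
    then show ?thesis
      using k[rule_format, of y x] a vge_congruent[of x y a] by metis
  qed
  then show ?thesis
    using a by (intro exI[of _ a] exI[of _ "max k a"]) auto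
qed

lemma right_transl_upper_cell_ind:
  "rt (upper (- r)) (cell_ind k) (mat2 a b c d) =
    (if a*d - b*c \<noteq> 0 \<and> c \<noteq> 0 \<and> vge v (d / c - r) k then chi (- (a*d - b*c) / c) c else 0)"
proof -
  have prod: "mat2 a b c d ** upper (- r) = mat2 a (b - a * r) c (d - c * r)"
    by (simp add: upper_def algebra_simps)
  have det: "a * (d - c * r) - (b - a * r) * c = a*d - b*c"
    by (simp add: algebra_simps)
  show ?thesis
  proof (cases "c = 0")
    case False
    then have "(d - c * r) / c = d / c - r"
      by (simp add: field_simps)
    then show ?thesis
      unfolding right_transl_def prod cell_ind_mat2 det using False by simp
  qed (unfold right_transl_def prod, simp add: cell_ind_mat2)
qed

lemma big_cell_expansion:
  assumes f: "f \<in> V" and f1: "f (mat 1) = 0" and I: "finite I" and ab: "a \<le> b"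
    and r: "\<forall>i\<in>I. vge v (r i) a" and uniq: "\<forall>x. vge v x a \<longrightarrow> (\<exists>!i. i \<in> I \<and> vge v (x - r i) b)"
    and vanish: "\<forall>x. \<not> vge v x a \<longrightarrow> f (mat2 0 1 1 x) = 0"
    and period: "\<forall>x y. vge v (x - y) b \<longrightarrow> f (mat2 0 1 1 x) = f (mat2 0 1 1 y)"
  shows "f = (\<lambda>g. \<Sum>i\<in>I. f (mat2 0 1 1 (r i)) * rt (upper (- r i)) (cell_ind b) g)"
proof
  fix g :: "'a^2^2"
  obtain a' b' c d where gd: "g = mat2 a' b' c d"
    by (rule mat2_cases)
  show "f g = (\<Sum>i\<in>I. f (mat2 0 1 1 (r i)) * rt (upper (- r i)) (cell_ind b) g)"
  proof (cases "g \<in> GL2 \<and> c \<noteq> 0")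
    case True
    define ch where "ch = chi (- (a'*d - b'*c) / c) c"
    have "f g = ch * f (mat2 0 1 1 (d / c))"
      using Ind_big_cell[OF f, of c a' d b'] gd True by (simp add: ch_def)
    also have "f (mat2 0 1 1 (d / c)) =
        (\<Sum>i\<in>I. if vge v (d / c - r i) b then f (mat2 0 1 1 (r i)) else 0)"
      by (rule step_function_expansion[OF I ab r uniq vanish period])
    also have "ch * (\<Sum>i\<in>I. if vge v (d / c - r i) b then f (mat2 0 1 1 (r i)) else 0) =
        (\<Sum>i\<in>I. f (mat2 0 1 1 (r i)) * rt (upper (- r i)) (cell_ind b) g)"
      unfolding sum_distrib_left using True gd
      by (intro sum.cong refl) (simp add: right_transl_upper_cell_ind ch_def)
    finally show ?thesis .
  next
    case False
    have "f g = 0"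
    proof (cases "g \<in> GL2")
      case True
      then have "g \<in> Borel"
        using False gd by (simp add: Borel_def)
      then show ?thesis
        using Ind_Borel[OF f] f1 by (metis mult_zero_right)
    qed (rule Ind_outside_GL2[OF f])
    moreover have "rt (upper (- r i)) (cell_ind b) g = 0" for i
      using False gd by (auto simp: right_transl_upper_cell_ind)
    ultimately show ?thesis
      by simp
  qed
qed

lemma cell_ind_expansion:
  assumes R: "finite R" and j: "0 \<le> j"
    and r: "\<forall>c\<in>R. vge v (r c) k" "\<forall>x. vge v x k \<longrightarrow> (\<exists>!c. c \<in> R \<and> vge v (x - r c) (k + j))"
  shows "cell_ind k = (\<lambda>g. \<Sum>c\<in>R. rt (upper (- r c)) (cell_ind (k + j)) g)"
proof -
  have period: "\<forall>x y. vge v (x - y) (k + j) \<longrightarrow> cell_ind k (mat2 0 1 1 x) = cell_ind k (mat2 0 1 1 y)"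
  proof (intro allI impI)
    fix x y assume "vge v (x - y) (k + j)"
    then have "vge v (x - y) k"
      using vge_mono[of "x - y" "k + j" k] j by simp
    then show "cell_ind k (mat2 0 1 1 x) = cell_ind k (mat2 0 1 1 y)"
      using vge_congruent by simp
  qed
  have "cell_ind k = (\<lambda>g. \<Sum>c\<in>R. cell_ind k (mat2 0 1 1 (r c)) * rt (upper (- r c)) (cell_ind (k + j)) g)"
    by (rule big_cell_expansion[OF cell_ind_Ind _ R _ r _ period]) (use j in \<open>simp_all add: mat1_eq_mat2\<close>)
  then show ?thesis
    using r(1) by simp
qed

definition weyl_cell_ind :: "int \<Rightarrow> 'a^2^2 \<Rightarrow> 'k" where
  "weyl_cell_ind k = rt weyl (cell_ind k)"

lemma weyl_cell_ind_Ind: "weyl_cell_ind k \<in> V"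
  unfolding weyl_cell_ind_def by (simp add: right_transl_Ind cell_ind_Ind)

lemma weyl_cell_ind_mat2: "weyl_cell_ind k (mat2 a b c d) = cell_ind k (mat2 b a d c)"
  by (simp add: weyl_cell_ind_def right_transl_def weyl_def cell_ind_mat2 algebra_simps)

lemma weyl_cell_ind_one [simp]: "weyl_cell_ind k (mat 1) = 1"
  by (simp add: mat1_eq_mat2 weyl_cell_ind_mat2)

lemma weyl_cell_ind_weyl [simp]: "weyl_cell_ind k weyl = 0"
  by (simp add: weyl_def weyl_cell_ind_mat2)

lemma weyl_cell_ind_eventually_zero:
  assumes "g $ 2 $ 1 \<noteq> 0"
  shows "\<exists>k0. \<forall>k\<ge>k0. weyl_cell_ind k g = 0"
proof -
  obtain a b c d where gd: "g = mat2 a b c d"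
    by (rule mat2_cases)
  have "weyl_cell_ind k g = 0" if "v (c/d) + 1 \<le> k" for k
    using assms that by (cases "d = 0") (auto simp: gd weyl_cell_ind_mat2 cell_ind_mat2 vge_iff)
  then show ?thesis
    by blast
qed

end

section \<open>The defect of a Borel-equivariant map\<close>

locale borel_hom = induced v p chi for v :: "'a::field \<Rightarrow> int" and p and chi :: "'a \<Rightarrow> 'a \<Rightarrow> 'k::field" +
  fixes smul :: "'k \<Rightarrow> 'v::ab_group_add \<Rightarrow> 'v" and rho :: "'a^2^2 \<Rightarrow> 'v \<Rightarrow> 'v"
    and phi :: "('a^2^2 \<Rightarrow> 'k) \<Rightarrow> 'v"
  assumes smooth_rep: "smooth_rep v smul rho"
    and phi_Hom: "phi \<in> Hom_H Borel v chi smul rho"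
begin

sublocale VS: vector_space smul
  using smooth_rep by (simp add: smooth_rep_def)

lemma rho_linear: "g \<in> GL2 \<Longrightarrow> Vector_Spaces.linear smul smul (rho g)"
  using smooth_rep by (simp add: smooth_rep_def)

lemma rho_smul: "g \<in> GL2 \<Longrightarrow> rho g (smul c x) = smul c (rho g x)"
  using rho_linear[of g] by (simp add: Vector_Spaces.linear_iff)

lemma rho_additive: "g \<in> GL2 \<Longrightarrow> additive (rho g)"
  using rho_linear[of g] by (simp add: Vector_Spaces.linear_iff additive_def)

lemma rho_zero: "g \<in> GL2 \<Longrightarrow> rho g 0 = 0"
  using additive.zero[OF rho_additive] by blast

lemma rho_diff: "g \<in> GL2 \<Longrightarrow> rho g (x - y) = rho g x - rho g y"
  using additive.diff[OF rho_additive] by blast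

lemma rho_sum: "g \<in> GL2 \<Longrightarrow> rho g (sum h A) = (\<Sum>x\<in>A. rho g (h x))"
  using additive.sum[OF rho_additive] by blast

lemma rho_one: "rho (mat 1) x = x"
  using smooth_rep by (simp add: smooth_rep_def)

lemma rho_mult: "g \<in> GL2 \<Longrightarrow> h \<in> GL2 \<Longrightarrow> rho (g ** h) x = rho g (rho h x)"
  using smooth_rep by (simp add: smooth_rep_def)

lemma rho_smooth: "\<exists>n. \<forall>k\<in>K n. rho k x = x"
  using smooth_rep unfolding smooth_rep_def by blast

lemma phi_add: "f1 \<in> V \<Longrightarrow> f2 \<in> V \<Longrightarrow> phi (\<lambda>x. f1 x + f2 x) = phi f1 + phi f2"
  using phi_Hom by (simp add: Hom_H_def)

lemma phi_scale: "f \<in> V \<Longrightarrow> phi (\<lambda>x. c * f x) = smul c (phi f)"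
  using phi_Hom by (simp add: Hom_H_def)

lemma phi_Borel: "b \<in> Borel \<Longrightarrow> f \<in> V \<Longrightarrow> phi (rt b f) = rho b (phi f)"
  using phi_Hom by (simp add: Hom_H_def)

lemma phi_diff: "f1 \<in> V \<Longrightarrow> f2 \<in> V \<Longrightarrow> phi (\<lambda>x. f1 x - f2 x) = phi f1 - phi f2"
  using phi_add[OF Ind_diff, of f1 f2 f2] by (simp add: eq_diff_eq)

lemma phi_sum_scale:
  assumes "finite I" "\<And>i. i \<in> I \<Longrightarrow> F i \<in> V"
  shows "phi (\<lambda>x. \<Sum>i\<in>I. c i * F i x) = (\<Sum>i\<in>I. smul (c i) (phi (F i)))"
  using assms
proof (induction I rule: finite_induct)
  case empty
  show ?case
    using phi_scale[OF cell_ind_Ind, of 0 0] by simp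
next
  case (insert i I)
  have "phi (\<lambda>x. \<Sum>i\<in>insert i I. c i * F i x) = phi (\<lambda>x. c i * F i x + (\<Sum>i\<in>I. c i * F i x))"
    using insert by simp
  also have "\<dots> = smul (c i) (phi (F i)) + phi (\<lambda>x. \<Sum>i\<in>I. c i * F i x)"
    using insert by (simp add: phi_add phi_scale Ind_scale Ind_sum)
  finally show ?case
    using insert by simp
qed

lemma phi_sum: "finite I \<Longrightarrow> (\<And>i. i \<in> I \<Longrightarrow> F i \<in> V) \<Longrightarrow> phi (\<lambda>x. \<Sum>i\<in>I. F i x) = (\<Sum>i\<in>I. phi (F i))"
  using phi_sum_scale[of I F "\<lambda>_. 1"] by simp

definition defect :: "'a^2^2 \<Rightarrow> ('a^2^2 \<Rightarrow> 'k) \<Rightarrow> 'v" where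
  "defect g f = phi (rt g f) - rho g (phi f)"

lemma defect_Borel: "b \<in> Borel \<Longrightarrow> f \<in> V \<Longrightarrow> defect b f = 0"
  by (simp add: defect_def phi_Borel)

lemma defect_diff:
  assumes g: "g \<in> GL2" and f: "f1 \<in> V" "f2 \<in> V"
  shows "defect g (\<lambda>x. f1 x - f2 x) = defect g f1 - defect g f2"
  using f right_transl_Ind[OF _ g]
  by (simp add: defect_def right_transl_linear phi_diff rho_diff[OF g])

lemma defect_scale:
  assumes g: "g \<in> GL2" and f: "f \<in> V"
  shows "defect g (\<lambda>x. c * f x) = smul c (defect g f)"
  using f right_transl_Ind[OF f g]
  by (simp add: defect_def right_transl_linear phi_scale rho_smul[OF g] VS.scale_right_diff_distrib)

lemma defect_sum_scale:
  assumes I: "finite I" and F: "\<And>i. i \<in> I \<Longrightarrow> F i \<in> V" and g: "g \<in> GL2"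
  shows "defect g (\<lambda>x. \<Sum>i\<in>I. c i * F i x) = (\<Sum>i\<in>I. smul (c i) (defect g (F i)))"
proof -
  have "phi (rt g (\<lambda>x. \<Sum>i\<in>I. c i * F i x)) = (\<Sum>i\<in>I. smul (c i) (phi (rt g (F i))))"
    unfolding right_transl_linear by (rule phi_sum_scale[OF I right_transl_Ind[OF F g]])
  moreover have "rho g (phi (\<lambda>x. \<Sum>i\<in>I. c i * F i x)) = (\<Sum>i\<in>I. smul (c i) (rho g (phi (F i))))"
    by (simp add: phi_sum_scale[OF I F] rho_sum[OF g] rho_smul[OF g])
  ultimately show ?thesis
    by (simp add: defect_def sum_subtractf VS.scale_right_diff_distrib)
qed

lemma defect_cocycle:
  assumes "g1 \<in> GL2" "g2 \<in> GL2"
  shows "defect (g1 ** g2) f = defect g1 (rt g2 f) + rho g1 (defect g2 f)"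
  using assms by (simp add: defect_def right_transl_mult rho_mult rho_diff)

lemma defect_left_Borel:
  assumes b: "b \<in> Borel" and g: "g \<in> GL2" and f: "f \<in> V"
  shows "defect (b ** g) f = rho b (defect g f)"
  using defect_cocycle[OF Borel_GL2[OF b] g] defect_Borel[OF b right_transl_Ind[OF f g]] by simp

lemma defect_right_Borel:
  assumes g: "g \<in> GL2" and b: "b \<in> Borel" and f: "f \<in> V"
  shows "defect (g ** b) f = defect g (rt b f)"
  using defect_cocycle[OF g Borel_GL2[OF b]] defect_Borel[OF b f] rho_zero[OF g] by simp

lemma phi_cell_ind_unit_diag:
  assumes al: "vge v (al - 1) level" and de: "vge v (de - 1) level"
  shows "rho (mat2 al 0 0 de) (phi (cell_ind k)) = phi (cell_ind k)"
proof -
  have "rt (mat2 al 0 0 de) (cell_ind k) = cell_ind k"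
    by (rule Ind_eqI[OF cell_ind_Ind])
      (simp_all add: right_transl_def cell_ind_right_unit_Borel[OF _ al de vge_0])
  moreover have "mat2 al 0 0 de \<in> Borel"
    using unit_near_one_level[OF al] unit_near_one_level[OF de] by simp
  ultimately show ?thesis
    using phi_Borel[OF _ cell_ind_Ind] by metis
qed

text \<open>Conjugation by \<open>diag(\<pi>^j, 1)\<close> shrinks lower unipotents and turns \<open>cell_ind k\<close> into a
  multiple of \<open>cell_ind (k + j)\<close>; so smoothness of \<open>rho\<close> at \<open>phi (cell_ind k)\<close> yields
  invariance of \<open>phi (cell_ind (k + j))\<close> under lower unipotents of fixed size.\<close>

lemma phi_deep_cell_ind_lower_invariant:
  "\<exists>j\<ge>0. \<forall>y. vge v y (level - k) \<longrightarrow> rho (lower y) (phi (cell_ind (k + j))) = phi (cell_ind (k + j))"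
proof -
  define z where "z = phi (cell_ind k)"
  obtain m where m: "\<forall>\<kappa>\<in>K m. rho \<kappa> z = z"
    using rho_smooth by blast
  define j where "j = max 0 (m - level + k)"
  define s where "s = mat2 (unif_pow j) 0 0 (1::'a)"
  define w where "w = phi (cell_ind (k + j))"
  have s: "s \<in> Borel" "s \<in> GL2"
    by (simp_all add: s_def)
  have sw: "smul (chi 1 (unif_pow j)) w = rho s z"
    using phi_Borel[OF s(1) cell_ind_Ind, of k] phi_scale[OF cell_ind_Ind]
    by (simp add: s_def right_transl_diag_cell_ind w_def z_def)
  have w_eq: "w = smul (inverse (chi 1 (unif_pow j))) (rho s z)"
    unfolding sw[symmetric] using chi_nonzero[of 1 "unif_pow j"] by simp
  have "rho (lower y) w = w" if y: "vge v y (level - k)" for y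
  proof -
    have "lower (y * unif_pow j) \<in> K m"
      using y vge_mono[of y "level - k" "m - j"] by (simp add: lower_def congr_sub_mat2 vge_mult_iff j_def)
    moreover have "lower y ** s = s ** lower (y * unif_pow j)"
      by (simp add: lower_def s_def)
    ultimately have "rho (lower y) (rho s z) = rho s z"
      using m s(2) rho_mult[of "lower y" s z] rho_mult[of s "lower (y * unif_pow j)" z] by simp
    then show ?thesis
      unfolding w_eq by (simp add: rho_smul)
  qed
  then show ?thesis
    unfolding w_def by (intro exI[of _ j]) (simp add: j_def)
qed

lemma phi_cell_ind_expansion:
  assumes "finite R" "0 \<le> j"
    "\<forall>c\<in>R. vge v (r c) k" "\<forall>x. vge v x k \<longrightarrow> (\<exists>!c. c \<in> R \<and> vge v (x - r c) (k + j))"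
  shows "phi (cell_ind k) = (\<Sum>c\<in>R. rho (upper (- r c)) (phi (cell_ind (k + j))))"
  by (subst cell_ind_expansion[OF assms])
    (simp add: phi_sum[OF assms(1)] right_transl_Ind cell_ind_Ind phi_Borel)

text \<open>By \<open>lower_upper_factor\<close>, \<open>lower y\<close> moves \<open>upper (- c)\<close> to \<open>upper (- c / (1 - c*y))\<close> up to
  factors fixing \<open>phi (cell_ind (k + j))\<close>, and \<open>c \<mapsto> c / (1 - c*y)\<close> permutes coset
  representatives (\<open>coset_reps_moebius\<close>).\<close>

lemma phi_cell_ind_lower_invariant:
  assumes y: "vge v y (level - k)"
  shows "rho (lower y) (phi (cell_ind k)) = phi (cell_ind k)"
proof -
  obtain j where j: "0 \<le> j"
    and w_lower: "\<And>y. vge v y (level - k) \<Longrightarrow> rho (lower y) (phi (cell_ind (k + j))) = phi (cell_ind (k + j))"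
    using phi_deep_cell_ind_lower_invariant by blast
  define w where "w = phi (cell_ind (k + j))"
  obtain R where R: "finite R" "\<forall>c\<in>R. vge v c k" "\<forall>x. vge v x k \<longrightarrow> (\<exists>!c. c \<in> R \<and> vge v (x - c) (k + j))"
    using ball_coset_reps[of k "k + j"] j by auto
  define tau where "tau c = c / (1 - c*y)" for c
  have "vge v y (1 - k)"
    using vge_mono[OF y] level(1) by simp
  note tau_R = coset_reps_moebius[OF this R(2,3), folded tau_def]
  have moved: "rho (lower y) (rho (upper (- c)) w) = rho (upper (- tau c)) w" if c: "c \<in> R" for c
  proof -
    have cy: "vge v (c*y) level"
      using vge_mult[OF _ y, of c k] R(2) c by simp
    then have u: "1 - c*y \<noteq> 0" "v (1 - c*y) = 0"
      using unit_near_one_level[of "1 - c*y"] by auto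
    define y' where "y' = y / (1 - c*y)"
    define D where "D = mat2 (1 / (1 - c*y)) 0 0 (1 - c*y)"
    have y': "vge v y' (level - k)"
      using y u by (simp add: y'_def vge_divide_unit)
    have "1 / (1 - c*y) - 1 = (c*y) / (1 - c*y)"
      using u by (simp add: field_simps)
    then have "rho D w = w"
      unfolding D_def w_def using cy u by (intro phi_cell_ind_unit_diag) (simp_all add: vge_divide_unit)
    moreover have "D \<in> GL2"
      using u by (simp add: D_def)
    moreover have "lower y ** upper (- c) = upper (- tau c) ** D ** lower y'"
      unfolding lower_upper_factor[OF u(1)] tau_def D_def y'_def ..
    ultimately have "rho (upper (- tau c) ** D ** lower y') w = rho (upper (- tau c)) w"
      using w_lower[OF y'] rho_mult[of "upper (- tau c) ** D" "lower y'"] rho_mult[of "upper (- tau c)" D]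
      by (simp add: GL2_mult w_def)
    then show ?thesis
      using \<open>lower y ** upper (- c) = _\<close> rho_mult[of "lower y" "upper (- c)" w] by simp
  qed
  have "rho (lower y) (phi (cell_ind k)) = (\<Sum>c\<in>R. rho (lower y) (rho (upper (- c)) w))"
    using phi_cell_ind_expansion[OF R(1) j, of "\<lambda>c. c"] R by (simp add: w_def rho_sum)
  also have "\<dots> = (\<Sum>c\<in>R. rho (upper (- tau c)) w)"
    by (simp add: moved)
  also have "\<dots> = phi (cell_ind k)"
    using phi_cell_ind_expansion[OF R(1) j tau_R] by (simp add: w_def)
  finally show ?thesis .
qed

lemma defect_Borel_lower_cell_ind:
  assumes b: "b \<in> Borel" and y: "vge v y (level - k)"
  shows "defect (b ** lower y) (cell_ind k) = 0"
proof -
  have "rt (lower y) (cell_ind k) = cell_ind k"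
    by (rule Ind_eqI[OF cell_ind_Ind]) (simp_all add: right_transl_def cell_ind_right_lower[OF _ y])
  then have "defect (lower y) (cell_ind k) = 0"
    using phi_cell_ind_lower_invariant[OF y] by (simp add: defect_def)
  then show ?thesis
    using defect_left_Borel[OF b _ cell_ind_Ind] rho_zero[OF Borel_GL2[OF b]] by simp
qed

lemma defect_upper_translate_cell_ind:
  assumes g: "g = mat2 a b c d" "g \<in> GL2" and c: "c \<noteq> 0"
    and r: "\<not> vge v (d / c - r) (k - level)"
  shows "defect (g ** upper (- r)) (cell_ind k) = 0"
proof -
  have x0: "d / c - r \<noteq> 0"
    using r by auto
  define de where "de = d - c * r"
  have de: "de = c * (d / c - r)"
    using c by (simp add: de_def field_simps)
  then have "de \<noteq> 0"
    using c x0 by simp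
  have "c / de = inverse (d / c - r)"
    using de c by (simp add: inverse_eq_divide)
  then have y: "vge v (c / de) (level - k)"
    using r x0 by (simp add: vge_iff v_inverse)
  have "a * de - (b - a * r) * c = a*d - b*c"
    by (simp add: de_def algebra_simps)
  then have "mat2 ((a * de - (b - a * r) * c) / de) (b - a * r) 0 de \<in> Borel"
    using g \<open>de \<noteq> 0\<close> by simp
  moreover have "g ** upper (- r) = mat2 a (b - a * r) c de"
    by (simp add: g(1) upper_def de_def algebra_simps)
  ultimately show ?thesis
    using defect_Borel_lower_cell_ind[OF _ y] Borel_lower_factor[OF \<open>de \<noteq> 0\<close>, of a "b - a * r" c] by simp
qed

text \<open>Expanding \<open>f\<close> in translates \<open>upper (- r) \<cdot> cell_ind k\<close>, only those with \<open>r\<close> far from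
  \<open>d/c\<close> contribute, because \<open>f\<close> vanishes near \<open>g\<close>; for those, \<open>g ** upper (- r)\<close> lies in
  \<open>P * lower (small)\<close>, where the defect vanishes.\<close>

lemma defect_eq_0_if_vanishes:
  assumes f: "f \<in> V" and f1: "f (mat 1) = 0" and g: "g \<in> GL2" and fg: "f g = 0"
  shows "defect g f = 0"
proof (cases "g $ 2 $ 1 = 0")
  case True
  then show ?thesis
    using g f defect_Borel by (simp add: Borel_def)
next
  case False
  obtain a b c d where gd: "g = mat2 a b c d"
    by (rule mat2_cases)
  have c: "c \<noteq> 0" and D: "a*d - b*c \<noteq> 0"
    using False g gd by auto
  have f_at_g: "f (mat2 0 1 1 (d / c)) = 0"
    using Ind_big_cell[OF f c D] fg gd chi_nonzero[of "- (a*d - b*c) / c" c] c D by simp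
  obtain a0 k0 where ak: "a0 \<le> k0" "\<forall>x. \<not> vge v x a0 \<longrightarrow> f (mat2 0 1 1 x) = 0"
      "\<forall>x y. vge v (x - y) k0 \<longrightarrow> f (mat2 0 1 1 x) = f (mat2 0 1 1 y)"
    using Ind_weyl_line_compact_periodic[OF f f1] by blast
  define k where "k = k0 + level"
  have period: "\<forall>x y. vge v (x - y) k \<longrightarrow> f (mat2 0 1 1 x) = f (mat2 0 1 1 y)"
    using ak(3) vge_mono[of _ k k0] level(1) by (simp add: k_def)
  obtain R where R: "finite R" "\<forall>r\<in>R. vge v r a0" "\<forall>x. vge v x a0 \<longrightarrow> (\<exists>!r. r \<in> R \<and> vge v (x - r) k)"
    using ball_coset_reps[of a0 k] ak(1) level(1) by (auto simp: k_def)
  have "f = (\<lambda>x. \<Sum>r\<in>R. f (mat2 0 1 1 r) * rt (upper (- r)) (cell_ind k) x)"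
    using big_cell_expansion[OF f f1 R(1) _ R(2,3) ak(2) period] ak(1) level(1) by (simp add: k_def)
  then have "defect g f = defect g (\<lambda>x. \<Sum>r\<in>R. f (mat2 0 1 1 r) * rt (upper (- r)) (cell_ind k) x)"
    by (rule arg_cong)
  also have "\<dots> = (\<Sum>r\<in>R. smul (f (mat2 0 1 1 r)) (defect (g ** upper (- r)) (cell_ind k)))"
    using R(1) g by (simp add: defect_sum_scale right_transl_Ind cell_ind_Ind defect_right_Borel)
  also have "\<dots> = 0"
  proof (intro sum.neutral ballI)
    fix r
    show "smul (f (mat2 0 1 1 r)) (defect (g ** upper (- r)) (cell_ind k)) = 0"
    proof (cases "f (mat2 0 1 1 r) = 0")
      case False
      then have "\<not> vge v (d / c - r) (k - level)"
        using ak(3) f_at_g by (metis vge_diff_commute add_diff_cancel_right' k_def)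
      then show ?thesis
        using defect_upper_translate_cell_ind[OF gd g c] by simp
    qed simp
  qed
  finally show ?thesis .
qed

lemma defect_eq_scale_at_one:
  assumes g: "g \<in> GL2" and f: "f \<in> V" and F: "F \<in> V" and F1: "F (mat 1) = 1"
    and fg: "f g = 0" and Fg: "F g = 0"
  shows "defect g f = smul (f (mat 1)) (defect g F)"
proof -
  have "defect g (\<lambda>x. f x - f (mat 1) * F x) = 0"
    using F1 fg Fg by (intro defect_eq_0_if_vanishes Ind_diff Ind_scale f F g) simp_all
  then show ?thesis
    using defect_diff[OF g f Ind_scale[OF F]] defect_scale[OF g F] by simp
qed

definition weyl_defect :: 'v where
  "weyl_defect = defect weyl (weyl_cell_ind 0)"

lemma defect_weyl: "f \<in> V \<Longrightarrow> f weyl = 0 \<Longrightarrow> defect weyl f = smul (f (mat 1)) weyl_defect"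
  unfolding weyl_defect_def by (rule defect_eq_scale_at_one) (simp_all add: weyl_cell_ind_Ind)

lemma weyl_defect_lower_invariant: "rho (lower y) weyl_defect = weyl_defect"
proof (cases "y = 0")
  case True
  then show ?thesis
    by (simp add: lower_def mat1_eq_mat2[symmetric] rho_one)
next
  case False
  obtain k where k: "weyl_cell_ind k (mat2 0 1 1 y) = 0"
    using weyl_cell_ind_eventually_zero[of "mat2 0 1 1 y"] by auto
  have LW: "lower y ** weyl = weyl ** upper y" "lower y ** weyl = mat2 0 1 1 y"
    by (simp_all add: lower_def weyl_def upper_def)
  have "defect (lower y ** weyl) (weyl_cell_ind k) = rho (lower y) weyl_defect"
  proof -
    have "defect (lower y) (rt weyl (weyl_cell_ind k)) = 0"
      using k LW(2) by (intro defect_eq_0_if_vanishes right_transl_Ind weyl_cell_ind_Ind)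
        (simp_all add: right_transl_def)
    then show ?thesis
      using defect_cocycle[of "lower y" weyl "weyl_cell_ind k"] defect_weyl[OF weyl_cell_ind_Ind] by simp
  qed
  moreover have "defect (weyl ** upper y) (weyl_cell_ind k) = weyl_defect"
  proof -
    have "rt (upper y) (weyl_cell_ind k) weyl = 0" "rt (upper y) (weyl_cell_ind k) (mat 1) = 1"
      using k LW Ind_Borel[OF weyl_cell_ind_Ind upper_Borel, of k y]
      by (simp_all add: right_transl_def upper_def)
    then show ?thesis
      using defect_right_Borel[OF _ upper_Borel weyl_cell_ind_Ind] defect_weyl[OF right_transl_Ind[OF weyl_cell_ind_Ind]]
      by simp
  qed
  ultimately show ?thesis
    using LW(1) by simp
qed

lemma weyl_defect_diag:
  assumes "al \<noteq> 0" "de \<noteq> 0"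
  shows "rho (mat2 al 0 0 de) weyl_defect = smul (chi de al) weyl_defect"
proof -
  have B: "mat2 al 0 0 de \<in> Borel" "mat2 de 0 0 al \<in> Borel"
    using assms by simp_all
  have swap: "mat2 al 0 0 de ** weyl = weyl ** mat2 de 0 0 al"
    by (simp add: weyl_def)
  have "rt (mat2 de 0 0 al) (weyl_cell_ind 0) weyl = 0"
    using swap Ind_Borel_left[OF weyl_cell_ind_Ind B(1), of weyl 0]
    by (simp add: right_transl_def)
  moreover have "rt (mat2 de 0 0 al) (weyl_cell_ind 0) (mat 1) = chi de al"
    using Ind_Borel[OF weyl_cell_ind_Ind B(2), of 0] by (simp add: right_transl_def)
  ultimately have "defect weyl (rt (mat2 de 0 0 al) (weyl_cell_ind 0)) = smul (chi de al) weyl_defect"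
    using defect_weyl[OF right_transl_Ind[OF weyl_cell_ind_Ind Borel_GL2[OF B(2)]]] by simp
  then have "defect (weyl ** mat2 de 0 0 al) (weyl_cell_ind 0) = smul (chi de al) weyl_defect"
    using defect_right_Borel[OF _ B(2) weyl_cell_ind_Ind] by simp
  moreover have "defect (mat2 al 0 0 de ** weyl) (weyl_cell_ind 0) = rho (mat2 al 0 0 de) weyl_defect"
    unfolding weyl_defect_def by (rule defect_left_Borel[OF B(1) _ weyl_cell_ind_Ind]) simp
  ultimately show ?thesis
    using swap by simp
qed

text \<open>With \<open>t = 1 / unif_pow M\<close> and \<open>t' = a * t\<close>, the torus element \<open>diag(a, 1/a)\<close> equals
  \<open>lower t * upper (-1/t) * lower t * lower (-t') * upper (1/t') * lower (-t')\<close>, whose upper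
  factors are in \<open>K m\<close> for \<open>M\<close> large; so it fixes \<open>weyl_defect\<close>, on which it acts by
  \<open>chi (1/a) a\<close>.\<close>

lemma weyl_defect_eq_0:
  assumes regular: "\<not> char_eq chi (char_swap chi)"
  shows "weyl_defect = 0"
proof -
  obtain m where m: "\<forall>\<kappa>\<in>K m. rho \<kappa> weyl_defect = weyl_defect"
    using rho_smooth by blast
  have upper_fixed: "rho (upper x) weyl_defect = weyl_defect" if "vge v x m" for x
    using m that by (simp add: upper_def congr_sub_mat2)
  obtain a0 d0 where ad: "a0 \<noteq> 0" "d0 \<noteq> 0" "chi a0 d0 \<noteq> chi d0 a0"
    using regular by (auto simp: char_eq_def char_swap_def)
  define a where "a = d0 / a0"
  have a: "a \<noteq> 0"
    using ad by (simp add: a_def)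
  have "chi a0 d0 = chi (d0 * (a0 / d0)) (a0 * (d0 / a0))"
    using ad by simp
  also have "\<dots> = chi d0 a0 * chi (a0 / d0) (d0 / a0)"
    by (rule chi_mult) (use ad in auto)
  finally have chi_a: "chi (1 / a) a \<noteq> 1"
    using ad by (auto simp: a_def)
  define t where "t = inverse (unif_pow (m + \<bar>v a\<bar>))"
  define t' where "t' = a * t"
  have t: "t \<noteq> 0" "t' \<noteq> 0"
    using a by (simp_all add: t_def t'_def)
  have "vge v (- (1 / t)) m" "vge v (1 / t') m"
    using a by (simp_all add: t_def t'_def vge_iff v_divide field_simps)
  then have "rho (lower t ** upper (- (1 / t)) ** lower t ** (lower (- t') ** upper (1 / t') ** lower (- t')))
      weyl_defect = weyl_defect"
    by (simp add: rho_mult GL2_mult weyl_defect_lower_invariant upper_fixed)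
  moreover have "lower t ** upper (- (1 / t)) ** lower t ** (lower (- t') ** upper (1 / t') ** lower (- t')) =
      mat2 a 0 0 (1 / a)"
    using t a by (simp add: lower_def upper_def t'_def field_simps)
  ultimately have "smul (chi (1 / a) a) weyl_defect = smul 1 weyl_defect"
    using weyl_defect_diag[of a "1 / a"] a by simp
  then have "smul (chi (1 / a) a - 1) weyl_defect = 0"
    by (simp add: VS.scale_left_diff_distrib)
  then show ?thesis
    using chi_a by simp
qed

lemma defect_big_cell_eq_0:
  assumes regular: "\<not> char_eq chi (char_swap chi)"
    and g: "g \<in> GL2" "g $ 2 $ 1 \<noteq> 0" and f: "f \<in> V" and fg: "f g = 0"
  shows "defect g f = 0"
proof -
  obtain a b c d where gd: "g = mat2 a b c d"
    by (rule mat2_cases)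
  have D: "a*d - b*c \<noteq> 0" and c: "c \<noteq> 0"
    using g gd by auto
  define b0 where "b0 = mat2 (- (a*d - b*c) / c) a 0 c"
  have b0: "b0 \<in> Borel"
    using D c by (simp add: b0_def)
  have g_eq: "g = b0 ** (weyl ** upper (d / c))"
    using Borel_weyl_upper_factor[OF c] gd by (simp add: b0_def)
  have "f (weyl ** upper (d / c)) = 0"
    using Ind_Borel_left[OF f b0, of "weyl ** upper (d / c)"] fg g_eq D c chi_nonzero
    by (simp add: b0_def GL2_mult)
  then have "defect weyl (rt (upper (d / c)) f) = 0"
    using defect_weyl[OF right_transl_Ind[OF f]] weyl_defect_eq_0[OF regular]
    by (simp add: right_transl_def rho_zero)
  then show ?thesis
    using g_eq defect_left_Borel[OF b0 _ f] defect_right_Borel[OF _ upper_Borel f] rho_zero[OF Borel_GL2[OF b0]]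
    by (simp add: GL2_mult)
qed

lemma defect_eq_0:
  assumes regular: "\<not> char_eq chi (char_swap chi)" and h: "h \<in> GL2" and f: "f \<in> V"
  shows "defect h f = 0"
proof (cases "h $ 2 $ 1 = 0")
  case True
  then show ?thesis
    using h f defect_Borel by (simp add: Borel_def)
next
  case False
  obtain h' where h': "h ** h' = mat 1" "h' ** h = mat 1" "h' \<in> GL2"
    using GL2_inverse[OF h] by blast
  have "h' $ 2 $ 1 \<noteq> 0"
    using False h'(2) by (cases h rule: mat2_cases, cases h' rule: mat2_cases) (auto simp: mat1_eq_mat2)
  then obtain k where k: "weyl_cell_ind k h' = 0"
    using weyl_cell_ind_eventually_zero by blast
  define G where "G = rt h' (weyl_cell_ind k)"
  have G: "G \<in> V" "G h = 1"
    using h h'(1) right_transl_Ind[OF weyl_cell_ind_Ind h'(3)] by (simp_all add: G_def right_transl_def)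
  have "defect h G = 0"
  proof -
    have "defect h' (weyl_cell_ind k) = 0"
      using defect_big_cell_eq_0[OF regular h'(3) \<open>h' $ 2 $ 1 \<noteq> 0\<close> weyl_cell_ind_Ind k] .
    then show ?thesis
      using defect_cocycle[OF h h'(3), of "weyl_cell_ind k"] h'(1)
      by (simp add: G_def defect_def rho_zero[OF h] rho_one right_transl_one weyl_cell_ind_Ind)
  qed
  moreover have "defect h (\<lambda>x. f x - f h * G x) = 0"
    using G by (intro defect_big_cell_eq_0[OF regular h False] Ind_diff Ind_scale f) simp_all
  ultimately show ?thesis
    using defect_diff[OF h f Ind_scale[OF G(1)]] defect_scale[OF h G(1)] by simp
qed

end

theorem corollary5p5:
  fixes v :: "'a::field \<Rightarrow> int" and p :: nat
    and chi :: "'a \<Rightarrow> 'a \<Rightarrow> 'k::field"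
    and smul :: "'k \<Rightarrow> 'v::ab_group_add \<Rightarrow> 'v" and rho :: "'a^2^2 \<Rightarrow> 'v \<Rightarrow> 'v"
  assumes "nonarch_local_field v p"
    and "is_alg_closure_Fp TYPE('k) p"
    and "smooth_character v chi"
    and "\<not> char_eq chi (char_swap chi)"
    and "smooth_rep v smul rho"
  shows "Hom_H GL2 v chi smul rho = Hom_H Borel v chi smul rho"
proof
  show "Hom_H GL2 v chi smul rho \<subseteq> Hom_H Borel v chi smul rho"
    unfolding Hom_H_def using Borel_GL2 by blast
  show "Hom_H Borel v chi smul rho \<subseteq> Hom_H GL2 v chi smul rho"
  proof
    fix phi assume phi: "phi \<in> Hom_H Borel v chi smul rho"
    \<comment> \<open>The argument works over any coefficient field.\<close>
    interpret borel_hom v p chi smul rho phi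
      using assms(1,3,5) phi by unfold_locales
    show "phi \<in> Hom_H GL2 v chi smul rho"
      using phi defect_eq_0[OF assms(4)] unfolding Hom_H_def defect_def by auto
  qed
qed

end
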